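(* Let $G$ be a finite group, let $H,K\leq G$, and let $p,q$ be primes. Then, for the prime ideals $\mathfrak{p}_{L,r}$ of the Burnside $G$-Tambara functor $\underline{A}_G$: (i) $\mathfrak{p}_{K,0}\subseteq\mathfrak{p}_{H,0}$ if and only if $H\preccurlyeq_G K$; (ii) $\mathfrak{p}_{H,0}\subsetneq\mathfrak{p}_{H,p}$ and $\mathfrak{p}_{H,p}\not\subseteq\mathfrak{p}_{K,0}$; (iii) $\mathfrak{p}_{K,p}\subseteq\mathfrak{p}_{H,q}$ if and only if $p=q$ and $O^p(H)\preccurlyeq_G O^p(K)$; (iv) $\mathfrak{p}_{K,0}\subseteq\mathfrak{p}_{H,p}$ if and only if $O^p(H)\preccurlyeq_G K$.
   Context: $A(H)$ is the Burnside ring of a finite group $H$; for $I\le H$, $\varphi^I_H\colon A(H)\to\mathbb{Z}$ is the ring map $X\mapsto|X^I|$, and for $r$ a prime or $0$, $\varphi^I_{H,r}$ is its composite with $\mathbb{Z}\to\mathbb{Z}/r\mathbb{Z}$. The Burnside $G$-Tambara functor $\underline{A}_G$ has $\underline{A}_G(G/H)=A(H)$ with restriction of action, transfer $K\times_H-$, norm $\mathrm{Map}_H(K,-)$ and conjugations. For $L\le G$ and $r$ a prime or $0$, $\mathfrak{p}_{L,r}$ is the (prime) Tambara ideal with $\mathfrak{p}_{L,r}(G/H)=\bigcap_{I\le H,\ I\preccurlyeq_G L}\ker(\varphi^I_{H,r})$, where $I\preccurlyeq_G L$ means $I$ is conjugate in $G$ to a subgroup of $L$. For $H\le G$ and $p$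 prime, $O^p(H)$ is the intersection of all normal subgroups $I\trianglelefteq H$ with $|H:I|$ a power of $p$. *)

theory Defs
  imports "HOL-Algebra.Algebra"
begin

definition subconj :: "('a, 'b) monoid_scheme \<Rightarrow> 'a set \<Rightarrow> 'a set \<Rightarrow> bool" where
  "subconj G I L \<longleftrightarrow> (\<exists>g\<in>carrier G. (g <#\<^bsub>G\<^esub> I) #>\<^bsub>G\<^esub> inv\<^bsub>G\<^esub> g \<subseteq> L)"

definition subgroups_of :: "('a, 'b) monoid_scheme \<Rightarrow> 'a set \<Rightarrow> 'a set set" where
  "subgroups_of G H = {J. subgroup J G \<and> J \<subseteq> H}"

definition coset_space :: "('a, 'b) monoid_scheme \<Rightarrow> 'a set \<Rightarrow> 'a set \<Rightarrow> 'a set set" where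
  "coset_space G H J = (\<lambda>h. h <#\<^bsub>G\<^esub> J) ` H"

definition fixed_cosets :: "('a, 'b) monoid_scheme \<Rightarrow> 'a set \<Rightarrow> 'a set \<Rightarrow> 'a set \<Rightarrow> nat" where
  "fixed_cosets G H J I = card {C \<in> coset_space G H J. \<forall>i\<in>I. i <#\<^bsub>G\<^esub> C = C}"

text \<open>Elements of the Burnside ring A(H) are represented by integer coefficient functions c
  on subgroups of H, standing for the virtual H-set  \<Sum>_J c J [H/J]  (every element of A(H)
  arises this way).\<close>
definition mark :: "('a, 'b) monoid_scheme \<Rightarrow> 'a set \<Rightarrow> 'a set \<Rightarrow> ('a set \<Rightarrow> int) \<Rightarrow> int" where
  "mark G H I c = (\<Sum>J\<in>subgroups_of G H. c J * int (fixed_cosets G H J I))"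

text \<open>The level G/H of the prime Tambara ideal p_{L,r} (r a prime or 0), as the set of
  representatives of its elements: the kernel of \<phi>^I_{H,r} is "r divides the mark".\<close>
definition pideal :: "('a, 'b) monoid_scheme \<Rightarrow> 'a set \<Rightarrow> nat \<Rightarrow> 'a set \<Rightarrow> ('a set \<Rightarrow> int) set" where
  "pideal G L r H = {c. \<forall>I\<in>subgroups_of G H. subconj G I L \<longrightarrow> int r dvd mark G H I c}"

definition tideal_le :: "('a, 'b) monoid_scheme \<Rightarrow> 'a set \<Rightarrow> nat \<Rightarrow> 'a set \<Rightarrow> nat \<Rightarrow> bool" where
  "tideal_le G L r L' r' \<longleftrightarrow> (\<forall>H. subgroup H G \<longrightarrow> pideal G L r H \<subseteq> pideal G L' r' H)"

definition tideal_less :: "('a, 'b) monoid_scheme \<Rightarrow> 'a set \<Rightarrow> nat \<Rightarrow> 'a set \<Rightarrow> nat \<Rightarrow> bool" where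
  "tideal_less G L r L' r' \<longleftrightarrow> tideal_le G L r L' r' \<and>
     (\<exists>H. subgroup H G \<and> pideal G L r H \<noteq> pideal G L' r' H)"

definition Op :: "('a, 'b) monoid_scheme \<Rightarrow> nat \<Rightarrow> 'a set \<Rightarrow> 'a set" where
  "Op G p H = \<Inter>{I. I \<subseteq> H \<and> I \<lhd> (G\<lparr>carrier := H\<rparr>) \<and> (\<exists>k. card H = p ^ k * card I)}"

end

theory Submission
  imports Defs
begin

text \<open>
  Whether an element of \<open>A(W)\<close> lies in \<open>p_{L,r}(G/W)\<close> depends only on its marks at the
  subgroups of \<open>W\<close> subconjugate to \<open>L\<close>. Two facts about marks decide all inclusions.

  Marks are multiplicative (a product of coset spaces is again a finite \<open>W\<close>-set),
  so elements vanishing at single proper subgroups of \<open>W\<close> multiply to one vanishing at all of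
  them, with nonzero mark at \<open>W\<close>; if \<open>O^p(W) = W\<close> that mark can even be taken prime to \<open>p\<close>.
  Such an element lies in \<open>p_{K,r}(G/W)\<close> but not in \<open>p_{H,s}(G/W)\<close> whenever \<open>W\<close> is
  subconjugate to \<open>H\<close> but not to \<open>K\<close>; take \<open>W = H\<close>, resp. \<open>W = O^p(H)\<close>.

  If a \<open>p\<close>-group \<open>Q\<close> normalises \<open>I\<close>, then \<open>|X^I| \<equiv> |X^(IQ)| mod p\<close> for every
  finite \<open>W\<close>-set \<open>X\<close>. Taking for \<open>Q\<close> a Sylow \<open>p\<close>-subgroup of \<open>I\<close>, for which
  \<open>O^p(I) Q = I\<close>, gives \<open>\<phi>^I \<equiv> \<phi>^(O^p(I)) mod p\<close>; as \<open>O^p\<close> preserves subconjugacy, this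
  yields the remaining inclusions.

  At level \<open>G/1\<close>, the element with mark \<open>r\<close> shows that \<open>p_{K,r} \<subseteq> p_{H,s}\<close> forces
  \<open>s\<close> to divide \<open>r\<close>.
\<close>

section \<open>Counting and divisibility\<close>

lemma card_eq_card_image_mult:
  assumes "finite A" "\<And>b. b \<in> f ` A \<Longrightarrow> card {a\<in>A. f a = b} = k"
  shows "card A = card (f ` A) * k"
proof -
  have "card A = card (\<Union>b\<in>f ` A. {a\<in>A. f a = b})" by (rule arg_cong[where f = card]) auto
  also have "\<dots> = (\<Sum>b\<in>f ` A. card {a\<in>A. f a = b})"
    by (rule card_UN_disjoint) (use assms(1) in auto)
  finally show ?thesis using assms(2) by simp
qed

lemma card_image_eq_if_same_fibers:
  assumes "\<And>x y. x \<in> A \<Longrightarrow> y \<in> A \<Longrightarrow> f x = f y \<longleftrightarrow> g x = g y"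
  shows "card (f ` A) = card (g ` A)"
proof -
  let ?h = "\<lambda>u. f (inv_into A g u)"
  have h: "?h (g x) = f x" if "x \<in> A" for x
    using assms that by (metis f_inv_into_f imageI inv_into_into)
  then have "f ` A = ?h ` g ` A" by (simp add: image_image cong: image_cong)
  moreover have "inj_on ?h (g ` A)" using h assms by (auto simp: inj_on_def)
  ultimately show ?thesis by (simp add: card_image)
qed

lemma prime_power_cofactor:
  fixes b m p k :: nat
  assumes p: "Factorial_Ring.prime p" and b: "0 < b" and bm: "b dvd m" and m: "m dvd p ^ k * b"
  shows "\<exists>i. m = p ^ i * b"
proof -
  obtain t where t: "m = b * t" using bm by (elim dvdE)
  then have "t dvd p ^ k" using b m by (simp add: mult.commute[of _ b])
  then obtain i where "t = p ^ i" using divides_primepow_nat[OF p] by blast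
  then show ?thesis using t by (auto simp: mult.commute)
qed

lemma dvd_if_multiplicity_part_dvd:
  fixes n m p k r :: nat
  assumes p: "Factorial_Ring.prime p" and n: "n = p ^ k * r" and n0: "n \<noteq> 0"
    and rm: "r dvd m" and pm: "p ^ multiplicity p n dvd m"
  shows "n dvd m"
proof -
  have "\<not> is_unit p" using p by (simp add: prime_nat_iff)
  then obtain u where u: "n = p ^ multiplicity p n * u" "\<not> p dvd u"
    using multiplicity_decompose'[OF n0] by blast
  have cop: "coprime u p" using prime_imp_coprime[OF p u(2)] by (simp add: ac_simps)
  have "u dvd p ^ k * r" using u(1) n by (metis dvd_triv_right)
  then have "u dvd r" using cop by (simp add: coprime_dvd_mult_right_iff)
  then have "u dvd m" using rm by (rule dvd_trans)
  moreover have "coprime (p ^ multiplicity p n) u" using cop by (simp add: ac_simps)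
  ultimately show ?thesis using divides_mult[OF pm] u(1) by metis
qed

lemma not_dvd_mult_if_zero_or_prime:
  fixes a b :: int
  assumes r: "r = 0 \<or> Factorial_Ring.prime r" and a: "\<not> int r dvd a" and b: "\<not> int r dvd b"
  shows "\<not> int r dvd a * b"
proof (cases "r = 0")
  case True
  then show ?thesis using a b by simp
next
  case False
  then have "Factorial_Ring.prime (int r)" using r by simp
  then show ?thesis using a b by (simp add: prime_dvd_mult_iff)
qed

section \<open>Conjugates, cosets and products of subgroups\<close>

context group
begin

lemma inv_mult_cancel_left [simp]: "x \<in> carrier G \<Longrightarrow> y \<in> carrier G \<Longrightarrow> inv x \<otimes> (x \<otimes> y) = y"
  by (simp add: m_assoc[symmetric])

lemma mult_inv_cancel_left [simp]: "x \<in> carrier G \<Longrightarrow> y \<in> carrier G \<Longrightarrow> x \<otimes> (inv x \<otimes> y) = y"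
  by (simp add: m_assoc[symmetric])

lemma conj_eq_image: "(g <# S) #> h = (\<lambda>s. g \<otimes> s \<otimes> h) ` S"
  by (auto simp: l_coset_def r_coset_def)

lemma conj_memI: "s \<in> S \<Longrightarrow> g \<otimes> s \<otimes> h \<in> (g <# S) #> h"
  by (auto simp: conj_eq_image)

lemma conj_memE:
  assumes "x \<in> (g <# S) #> h"
  obtains s where "s \<in> S" "x = g \<otimes> s \<otimes> h"
  using assms by (auto simp: conj_eq_image)

lemma conj_mono: "S \<subseteq> T \<Longrightarrow> (g <# S) #> h \<subseteq> (g <# T) #> h"
  by (auto simp: conj_eq_image)

lemma card_conj:
  assumes "S \<subseteq> carrier G" "g \<in> carrier G"
  shows "card ((g <# S) #> inv g) = card S"
proof -
  have "inj_on (\<lambda>s. g \<otimes> s \<otimes> inv g) S"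
    using assms by (auto simp: inj_on_def subset_iff)
  then show ?thesis by (simp add: conj_eq_image card_image)
qed

lemma conj_conj:
  assumes "S \<subseteq> carrier G" "g \<in> carrier G" "h \<in> carrier G"
  shows "(g <# ((h <# S) #> inv h)) #> inv g = ((g \<otimes> h) <# S) #> inv (g \<otimes> h)"
  using assms by (simp add: conj_eq_image image_image m_assoc inv_mult_group subset_iff
      cong: image_cong)

lemma conj_one: "S \<subseteq> carrier G \<Longrightarrow> (\<one> <# S) #> inv \<one> = S"
  by (simp add: conj_eq_image subset_iff cong: image_cong)

lemma conj_inv_conj:
  assumes "S \<subseteq> carrier G" "g \<in> carrier G"
  shows "(inv g <# ((g <# S) #> inv g)) #> inv (inv g) = S"
  using assms conj_conj[of S "inv g" g] conj_one by simp

lemma subconj_subset: "I \<subseteq> L \<Longrightarrow> I \<subseteq> carrier G \<Longrightarrow> subconj G I L"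
  unfolding subconj_def using conj_one one_closed by metis

lemma subconj_trans:
  assumes "subconj G I J" "subconj G J L" "I \<subseteq> carrier G"
  shows "subconj G I L"
proof -
  obtain g where g: "g \<in> carrier G" "(g <# I) #> inv g \<subseteq> J"
    using assms(1) by (auto simp: subconj_def)
  obtain h where h: "h \<in> carrier G" "(h <# J) #> inv h \<subseteq> L"
    using assms(2) by (auto simp: subconj_def)
  have "((h \<otimes> g) <# I) #> inv (h \<otimes> g) = (h <# ((g <# I) #> inv g)) #> inv h"
    using conj_conj assms(3) g h by simp
  also have "\<dots> \<subseteq> L" using conj_mono[OF g(2)] h(2) by blast
  finally show ?thesis unfolding subconj_def using g h by blast
qed

lemma subconj_mono_right: "subconj G I L \<Longrightarrow> L \<subseteq> L' \<Longrightarrow> subconj G I L'"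
  unfolding subconj_def by blast

lemma normalizes_inv:
  assumes "subgroup H G" "\<And>h n. h \<in> H \<Longrightarrow> n \<in> N \<Longrightarrow> h \<otimes> n \<otimes> inv h \<in> N" "h \<in> H" "n \<in> N"
  shows "inv h \<otimes> n \<otimes> h \<in> N"
  using assms(2)[of "inv h" n] assms by (simp add: subgroup.m_inv_closed subgroup.mem_carrier)

lemma lcos_eq_iff:
  assumes S: "subgroup S G" and h: "h \<in> carrier G" and h': "h' \<in> carrier G"
  shows "h <# S = h' <# S \<longleftrightarrow> inv h \<otimes> h' \<in> S"
proof
  assume eq: "h <# S = h' <# S"
  have "h' \<in> h' <# S" by (rule lcos_self[OF h' S])
  then obtain s where "s \<in> S" "h' = h \<otimes> s" using eq by (auto simp: l_coset_def)
  then show "inv h \<otimes> h' \<in> S" using S h by (simp add: subgroup.mem_carrier)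
next
  assume "inv h \<otimes> h' \<in> S"
  then have "h' \<in> h <# S" using subgroup.lcos_module_rev[OF S is_group h h'] by simp
  then show "h <# S = h' <# S" using l_repr_independence S h by blast
qed

lemma lcos_fixed_iff:
  assumes I: "subgroup I G" and h: "h \<in> carrier G" and x: "x \<in> carrier G"
  shows "x <# (h <# I) = h <# I \<longleftrightarrow> inv h \<otimes> x \<otimes> h \<in> I"
proof -
  have "x <# (h <# I) = (x \<otimes> h) <# I" using I h x by (simp add: lcos_m_assoc subgroup.subset)
  then show ?thesis
    using lcos_eq_iff[OF I h, of "x \<otimes> h"] h x by (auto simp: m_assoc)
qed

lemma set_mult_memI: "h \<in> H \<Longrightarrow> k \<in> K \<Longrightarrow> h \<otimes> k \<in> H <#> K"
  unfolding set_mult_def by auto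

lemma set_mult_memE:
  assumes "x \<in> H <#> K"
  obtains h k where "h \<in> H" "k \<in> K" "x = h \<otimes> k"
  using assms unfolding set_mult_def by auto

lemma subset_set_mult_left: "subgroup Q G \<Longrightarrow> I \<subseteq> carrier G \<Longrightarrow> I \<subseteq> I <#> Q"
  using set_mult_memI[of _ I \<one> Q] by (force simp: subgroup.one_closed)

lemma subset_set_mult_right: "subgroup I G \<Longrightarrow> Q \<subseteq> carrier G \<Longrightarrow> Q \<subseteq> I <#> Q"
  using set_mult_memI[of \<one> I _ Q] by (force simp: subgroup.one_closed)

lemma set_mult_subset_subgroup: "subgroup W G \<Longrightarrow> I \<subseteq> W \<Longrightarrow> Q \<subseteq> W \<Longrightarrow> I <#> Q \<subseteq> W"
  using mono_set_mult subgroup_mult_id by metis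

lemma subgroup_set_mult_normalizing:
  assumes I: "subgroup I G" and Q: "subgroup Q G"
    and norm: "\<And>q i. q \<in> Q \<Longrightarrow> i \<in> I \<Longrightarrow> inv q \<otimes> i \<otimes> q \<in> I"
  shows "subgroup (I <#> Q) G"
proof (rule subgroupI)
  have Ic: "I \<subseteq> carrier G" and Qc: "Q \<subseteq> carrier G" using I Q by (simp_all add: subgroup.subset)
  show "I <#> Q \<subseteq> carrier G" using Ic Qc by (rule setmult_subset_G)
  show "I <#> Q \<noteq> {}" using set_mult_memI[of \<one> I \<one> Q] I Q by (auto simp: subgroup.one_closed)
  fix x y assume "x \<in> I <#> Q" "y \<in> I <#> Q"
  then obtain i q j r where iq: "i \<in> I" "q \<in> Q" "x = i \<otimes> q" and jr: "j \<in> I" "r \<in> Q" "y = j \<otimes> r"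
    by (metis set_mult_memE)
  have c: "i \<in> carrier G" "q \<in> carrier G" "j \<in> carrier G" "r \<in> carrier G"
    using iq jr Ic Qc by auto
  have "inv x = (inv q \<otimes> inv i \<otimes> q) \<otimes> inv q" using c iq by (simp add: inv_mult_group m_assoc)
  moreover have "inv q \<otimes> inv i \<otimes> q \<in> I" using norm iq I by (simp add: subgroup.m_inv_closed)
  ultimately show "inv x \<in> I <#> Q"
    using set_mult_memI iq Q by (metis subgroup.m_inv_closed)
  have "x \<otimes> y = (i \<otimes> (inv (inv q) \<otimes> j \<otimes> inv q)) \<otimes> (q \<otimes> r)"
    using c iq jr by (simp add: m_assoc)
  moreover have "inv (inv q) \<otimes> j \<otimes> inv q \<in> I"
    using norm iq jr Q by (simp add: subgroup.m_inv_closed)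
  ultimately show "x \<otimes> y \<in> I <#> Q"
    using set_mult_memI iq jr I Q by (metis subgroup.m_closed)
qed

lemma mult_fiber_eq_image:
  assumes A: "subgroup A G" and B: "subgroup B G" and a0: "a0 \<in> A" and b0: "b0 \<in> B"
  shows "{(a, b) \<in> A \<times> B. a \<otimes> b = a0 \<otimes> b0} = (\<lambda>t. (a0 \<otimes> t, inv t \<otimes> b0)) ` (A \<inter> B)"
proof (intro equalityI subsetI)
  have c0: "a0 \<in> carrier G" "b0 \<in> carrier G"
    using subgroup.mem_carrier[OF A a0] subgroup.mem_carrier[OF B b0] .
  fix ab assume "ab \<in> {(a, b) \<in> A \<times> B. a \<otimes> b = a0 \<otimes> b0}"
  then obtain a b where ab: "ab = (a, b)" "a \<in> A" "b \<in> B" "a \<otimes> b = a0 \<otimes> b0" by auto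
  have c: "a \<in> carrier G" "b \<in> carrier G"
    using subgroup.mem_carrier[OF A ab(2)] subgroup.mem_carrier[OF B ab(3)] .
  have "inv a0 \<otimes> a = inv a0 \<otimes> (a \<otimes> b) \<otimes> inv b" using c c0 by (simp add: m_assoc)
  also have "\<dots> = b0 \<otimes> inv b" using ab(4) c c0 by simp
  finally have t: "inv a0 \<otimes> a = b0 \<otimes> inv b" .
  have "inv a0 \<otimes> a \<in> A" "b0 \<otimes> inv b \<in> B"
    using ab a0 b0 A B by (simp_all add: subgroup.m_closed subgroup.m_inv_closed)
  then have "inv a0 \<otimes> a \<in> A \<inter> B" using t by simp
  moreover have "a0 \<otimes> (inv a0 \<otimes> a) = a" using c c0 by simp
  moreover have "inv (inv a0 \<otimes> a) \<otimes> b0 = b" using t c c0 by (simp add: inv_mult_group m_assoc)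
  ultimately have "ab = (\<lambda>t. (a0 \<otimes> t, inv t \<otimes> b0)) (inv a0 \<otimes> a)" "inv a0 \<otimes> a \<in> A \<inter> B"
    using ab(1) by simp_all
  then show "ab \<in> (\<lambda>t. (a0 \<otimes> t, inv t \<otimes> b0)) ` (A \<inter> B)" by (rule image_eqI)
next
  fix ab assume "ab \<in> (\<lambda>t. (a0 \<otimes> t, inv t \<otimes> b0)) ` (A \<inter> B)"
  then obtain t where t: "t \<in> A" "t \<in> B" "ab = (a0 \<otimes> t, inv t \<otimes> b0)" by auto
  moreover have "t \<in> carrier G" "a0 \<in> carrier G" "b0 \<in> carrier G"
    using subgroup.mem_carrier[OF A t(1)] subgroup.mem_carrier[OF A a0] subgroup.mem_carrier[OF B b0] .
  ultimately show "ab \<in> {(a, b) \<in> A \<times> B. a \<otimes> b = a0 \<otimes> b0}"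
    using a0 b0 A B by (auto simp: subgroup.m_closed subgroup.m_inv_closed m_assoc)
qed

lemma card_set_mult_mult_card_Int:
  assumes fin: "finite (carrier G)" and A: "subgroup A G" and B: "subgroup B G"
  shows "card (A <#> B) * card (A \<inter> B) = card A * card B"
proof -
  have Ac: "A \<subseteq> carrier G" using A by (rule subgroup.subset)
  let ?f = "\<lambda>(a, b). a \<otimes> b"
  have "card (A \<times> B) = card (?f ` (A \<times> B)) * card (A \<inter> B)"
  proof (rule card_eq_card_image_mult)
    show "finite (A \<times> B)" using fin A B finite_subset subgroup.subset by blast
    fix x assume "x \<in> ?f ` (A \<times> B)"
    then obtain a0 b0 where ab0: "a0 \<in> A" "b0 \<in> B" "x = a0 \<otimes> b0" by auto
    have a0: "a0 \<in> carrier G" using ab0(1) Ac by blast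
    have "inj_on (\<lambda>t. (a0 \<otimes> t, inv t \<otimes> b0)) (A \<inter> B)"
    proof (rule inj_onI)
      fix u v assume "u \<in> A \<inter> B" "v \<in> A \<inter> B" "(a0 \<otimes> u, inv u \<otimes> b0) = (a0 \<otimes> v, inv v \<otimes> b0)"
      then have "a0 \<otimes> u = a0 \<otimes> v" "u \<in> carrier G" "v \<in> carrier G" using Ac by auto
      then show "u = v" using a0 by simp
    qed
    moreover have "{ab \<in> A \<times> B. ?f ab = x} = {(a, b) \<in> A \<times> B. a \<otimes> b = a0 \<otimes> b0}"
      using ab0(3) by auto
    ultimately show "card {ab \<in> A \<times> B. ?f ab = x} = card (A \<inter> B)"
      using mult_fiber_eq_image[OF A B ab0(1,2)] by (simp add: card_image)
  qed
  moreover have "?f ` (A \<times> B) = A <#> B" unfolding set_mult_def by auto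
  ultimately show ?thesis by (simp add: card_cartesian_product)
qed

lemma card_subgroup_dvd:
  assumes A: "subgroup A G" and B: "subgroup B G" and AB: "A \<subseteq> B"
  shows "card A dvd card B"
proof -
  interpret B: group "G\<lparr>carrier := B\<rparr>" by (rule subgroup_imp_group[OF B])
  have "card (rcosets\<^bsub>G\<lparr>carrier := B\<rparr>\<^esub> A) * card A = card B"
    using B.lagrange[OF subgroup_incl[OF A B AB]] by (simp add: order_def)
  then show ?thesis by (metis dvd_triv_right)
qed

lemma ex_subgroup_card_prime_power:
  assumes fin: "finite (carrier G)" and N: "subgroup N G" and p: "Factorial_Ring.prime p"
    and d: "p ^ a dvd card N"
  obtains Q where "subgroup Q G" "Q \<subseteq> N" "card Q = p ^ a"
proof -
  obtain m where "card N = p ^ a * m" using d by (elim dvdE)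
  then have "order (G\<lparr>carrier := N\<rparr>) = p ^ a * m" by (simp add: order_def)
  moreover have "finite (carrier (G\<lparr>carrier := N\<rparr>))"
    using finite_subset[OF subgroup.subset[OF N] fin] by simp
  ultimately obtain Q where Q: "subgroup Q (G\<lparr>carrier := N\<rparr>)" "card Q = p ^ a"
    using sylow_thm[OF p subgroup_imp_group[OF N]] by blast
  have "Q \<subseteq> N" using subgroup.subset[OF Q(1)] by simp
  then show ?thesis using that incl_subgroup[OF N Q(1)] Q(2) by blast
qed

end

section \<open>Actions of subgroups on finite sets\<close>

definition act_on :: "('a, 'b) monoid_scheme \<Rightarrow> 'a set \<Rightarrow> 'z set \<Rightarrow> ('a \<Rightarrow> 'z \<Rightarrow> 'z) \<Rightarrow> bool" where
  "act_on G W Z act \<longleftrightarrow> (\<forall>x\<in>W. \<forall>z\<in>Z. act x z \<in> Z) \<and> (\<forall>z\<in>Z. act \<one>\<^bsub>G\<^esub> z = z)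
     \<and> (\<forall>x\<in>W. \<forall>y\<in>W. \<forall>z\<in>Z. act (x \<otimes>\<^bsub>G\<^esub> y) z = act x (act y z))"

definition fixed_points :: "('a \<Rightarrow> 'z \<Rightarrow> 'z) \<Rightarrow> 'a set \<Rightarrow> 'z set \<Rightarrow> 'z set" where
  "fixed_points act I Z = {z\<in>Z. \<forall>i\<in>I. act i z = z}"

lemma act_on_closed: "act_on G W Z act \<Longrightarrow> x \<in> W \<Longrightarrow> z \<in> Z \<Longrightarrow> act x z \<in> Z"
  and act_on_one: "act_on G W Z act \<Longrightarrow> z \<in> Z \<Longrightarrow> act \<one>\<^bsub>G\<^esub> z = z"
  and act_on_mult: "act_on G W Z act \<Longrightarrow> x \<in> W \<Longrightarrow> y \<in> W \<Longrightarrow> z \<in> Z \<Longrightarrow>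
    act (x \<otimes>\<^bsub>G\<^esub> y) z = act x (act y z)"
  unfolding act_on_def by auto

lemma act_on_mono: "act_on G W Z act \<Longrightarrow> V \<subseteq> W \<Longrightarrow> act_on G V Z act"
  unfolding act_on_def by blast

context group
begin

lemma act_on_Times:
  assumes "act_on G W Y a" "act_on G W Y' a'"
  shows "act_on G W (Y \<times> Y') (\<lambda>x (y, y'). (a x y, a' x y'))"
  using assms unfolding act_on_def by auto

lemma fixed_points_Times:
  "fixed_points (\<lambda>x (y, y'). (a x y, a' x y')) I (Y \<times> Y') = fixed_points a I Y \<times> fixed_points a' I Y'"
  unfolding fixed_points_def by auto

lemma act_inv_act:
  assumes "act_on G W Z act" "subgroup W G" "x \<in> W" "z \<in> Z"
  shows "act (inv x) (act x z) = z"
  using assms act_on_mult[of G W Z act "inv x" x z] act_on_one[of G W Z act z]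
  by (simp add: subgroup.m_inv_closed subgroup.mem_carrier)

lemma act_eq_iff_stabilizer:
  assumes act: "act_on G W Z act" and W: "subgroup W G" and z: "z \<in> Z"
    and h: "h \<in> W" and h': "h' \<in> W"
  shows "act h z = act h' z \<longleftrightarrow> act (inv h \<otimes> h') z = z"
proof -
  have ih: "inv h \<in> W" using W h by (simp add: subgroup.m_inv_closed)
  have "act (inv h \<otimes> h') z = act (inv h) (act h' z)" using act_on_mult[OF act ih h' z] .
  moreover have "act h (act (inv h) (act h' z)) = act h' z"
    using act_inv_act[OF act W ih act_on_closed[OF act h' z]] W h by (simp add: subgroup.mem_carrier)
  ultimately show ?thesis using act_inv_act[OF act W h z] by metis
qed

lemma stabilizer_subgroup:
  assumes act: "act_on G W Z act" and W: "subgroup W G" and z: "z \<in> Z"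
  shows "subgroup {k\<in>W. act k z = z} G"
proof (rule subgroupI)
  show "{k\<in>W. act k z = z} \<noteq> {}"
    using W act_on_one[OF act z] subgroup.one_closed by fastforce
  fix a b assume a: "a \<in> {k\<in>W. act k z = z}" and b: "b \<in> {k\<in>W. act k z = z}"
  then show "inv a \<in> {k\<in>W. act k z = z}"
    using act_inv_act[OF act W _ z, of a] W by (simp add: subgroup.m_inv_closed)
  show "a \<otimes> b \<in> {k\<in>W. act k z = z}"
    using a b act_on_mult[OF act _ _ z, of a b] W by (simp add: subgroup.m_closed)
qed (use W subgroup.subset in blast)

lemma orbit_stabilizer:
  assumes act: "act_on G W Z act" and W: "subgroup W G" and fin: "finite W" and z: "z \<in> Z"
  shows "card W = card ((\<lambda>h. act h z) ` W) * card {k\<in>W. act k z = z}"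
proof (rule card_eq_card_image_mult[OF fin])
  let ?S = "{k\<in>W. act k z = z}"
  fix b assume "b \<in> (\<lambda>h. act h z) ` W"
  then obtain h where h: "h \<in> W" "b = act h z" by auto
  have hc: "h \<in> carrier G" using W h by (simp add: subgroup.mem_carrier)
  have "{a\<in>W. act a z = b} = (\<lambda>s. h \<otimes> s) ` ?S"
  proof (intro equalityI subsetI)
    fix a assume a: "a \<in> {a\<in>W. act a z = b}"
    then have aW: "a \<in> W" "act h z = act a z" using h by auto
    have "a = h \<otimes> (inv h \<otimes> a)" using aW hc W by (simp add: subgroup.mem_carrier)
    moreover have "inv h \<otimes> a \<in> ?S"
      using act_eq_iff_stabilizer[OF act W z h(1) aW(1)] aW h W
      by (simp add: subgroup.m_closed subgroup.m_inv_closed)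
    ultimately show "a \<in> (\<lambda>s. h \<otimes> s) ` ?S" by blast
  next
    fix a assume "a \<in> (\<lambda>s. h \<otimes> s) ` ?S"
    then obtain s where s: "s \<in> ?S" "a = h \<otimes> s" by blast
    then have "a \<in> W" using h W by (simp add: subgroup.m_closed)
    moreover have "inv h \<otimes> a = s" using s hc W by (simp add: m_assoc[symmetric] subgroup.mem_carrier)
    ultimately show "a \<in> {a\<in>W. act a z = b}"
      using act_eq_iff_stabilizer[OF act W z h(1), of a] s h by simp
  qed
  moreover have "inj_on (\<lambda>s. h \<otimes> s) ?S" using hc W by (auto simp: inj_on_def subgroup.mem_carrier)
  ultimately show "card {a\<in>W. act a z = b} = card ?S" by (simp add: card_image)
qed

lemma act_on_Diff_orbit:
  assumes act: "act_on G W Z act" and W: "subgroup W G" and z: "z \<in> Z"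
  shows "act_on G W (Z - (\<lambda>h. act h z) ` W) act"
proof -
  have "act x w \<notin> (\<lambda>h. act h z) ` W"
    if x: "x \<in> W" and w: "w \<in> Z" "w \<notin> (\<lambda>h. act h z) ` W" for x w
  proof
    assume "act x w \<in> (\<lambda>h. act h z) ` W"
    then obtain h where h: "h \<in> W" "act x w = act h z" by auto
    have ix: "inv x \<in> W" using W x by (simp add: subgroup.m_inv_closed)
    have "w = act (inv x) (act h z)" using act_inv_act[OF act W x w(1)] h by simp
    also have "\<dots> = act (inv x \<otimes> h) z" using act_on_mult[OF act ix h(1) z] by simp
    finally show False using w ix h(1) W by (simp add: subgroup.m_closed)
  qed
  then show ?thesis using act unfolding act_on_def by blast
qed

lemma fixed_point_in_orbit:
  assumes act: "act_on G W Z act" and W: "subgroup W G" and z: "z \<in> Z" and h: "h \<in> W"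
    and fixed: "act h z \<in> fixed_points act W Z"
  shows "z \<in> fixed_points act W Z"
proof -
  have "act q z = z" if q: "q \<in> W" for q
  proof -
    have ih: "inv h \<in> W" using W h by (simp add: subgroup.m_inv_closed)
    have c: "h \<in> carrier G" "q \<in> carrier G" using W h q by (auto simp: subgroup.mem_carrier)
    have hqh: "h \<otimes> q \<otimes> inv h \<in> W" using W h q ih by (simp add: subgroup.m_closed)
    have hz: "act h z \<in> Z" by (rule act_on_closed[OF act h z])
    have "q \<otimes> inv h = inv h \<otimes> (h \<otimes> q \<otimes> inv h)" using c by (simp add: m_assoc)
    then have "act q z = act (inv h \<otimes> (h \<otimes> q \<otimes> inv h)) (act h z)"
      using act_on_mult[OF act q ih hz] act_inv_act[OF act W h z] by simp
    also have "\<dots> = act (inv h) (act h z)"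
      using act_on_mult[OF act ih hqh hz] fixed hqh unfolding fixed_points_def by simp
    finally show ?thesis using act_inv_act[OF act W h z] by simp
  qed
  then show ?thesis using z unfolding fixed_points_def by blast
qed

lemma prime_dvd_card_orbit:
  assumes p: "Factorial_Ring.prime p" and Q: "subgroup Q G" and cQ: "card Q = p ^ a"
    and act: "act_on G Q Z act" and z: "z \<in> Z" "z \<notin> fixed_points act Q Z"
  shows "p dvd card ((\<lambda>h. act h z) ` Q)"
proof -
  let ?O = "(\<lambda>h. act h z) ` Q"
  have "card Q > 0" using cQ p by (simp add: prime_gt_0_nat)
  then have "card Q = card ?O * card {k\<in>Q. act k z = z}"
    by (intro orbit_stabilizer[OF act Q _ z(1)]) (simp add: card_gt_0_iff)
  then have "card ?O dvd p ^ a" using cQ by (metis dvd_triv_left)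
  then obtain j where j: "card ?O = p ^ j" using divides_primepow_nat[OF p] by blast
  moreover have "j \<noteq> 0"
  proof
    assume "j = 0"
    then obtain u where "?O = {u}" using j card_1_singletonE by auto
    moreover have "z \<in> ?O" using act_on_one[OF act z(1)] Q subgroup.one_closed by force
    ultimately have "?O = {z}" by simp
    then show False using z unfolding fixed_points_def by auto
  qed
  ultimately show ?thesis by simp
qed

lemma card_fixed_points_cong_pgroup:
  assumes p: "Factorial_Ring.prime p" and Q: "subgroup Q G" and cQ: "card Q = p ^ a"
    and fin: "finite Z" and act: "act_on G Q Z act"
  shows "int p dvd int (card Z) - int (card (fixed_points act Q Z))"
  using fin act
proof (induction Z rule: finite_psubset_induct)
  case (psubset Z)
  show ?case
  proof (cases "fixed_points act Q Z = Z")
    case True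
    then show ?thesis by simp
  next
    case False
    then obtain z where z: "z \<in> Z" "z \<notin> fixed_points act Q Z" unfolding fixed_points_def by auto
    let ?O = "(\<lambda>h. act h z) ` Q"
    have Osub: "?O \<subseteq> Z" using act_on_closed[OF psubset.prems _ z(1)] by auto
    have "z \<in> ?O" using act_on_one[OF psubset.prems z(1)] Q subgroup.one_closed by force
    then have "Z - ?O \<subset> Z" using z(1) by blast
    then have IH: "int p dvd int (card (Z - ?O)) - int (card (fixed_points act Q (Z - ?O)))"
      using psubset.IH act_on_Diff_orbit[OF psubset.prems Q z(1)] by blast
    have "fixed_points act Q Z = fixed_points act Q (Z - ?O)"
      using fixed_point_in_orbit[OF psubset.prems Q z(1)] z(2) unfolding fixed_points_def by blast
    moreover have "card Z = card (Z - ?O) + card ?O"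
      using Osub psubset.hyps by (metis card_Diff_subset card_mono finite_subset le_add_diff_inverse2)
    ultimately have "int (card Z) - int (card (fixed_points act Q Z))
        = (int (card (Z - ?O)) - int (card (fixed_points act Q (Z - ?O)))) + int (card ?O)"
      by simp
    then show ?thesis using IH prime_dvd_card_orbit[OF p Q cQ psubset.prems z] by simp
  qed
qed

lemma act_on_fixed_points_normalizing:
  assumes act: "act_on G W Z act" and W: "subgroup W G" and IW: "I \<subseteq> W" and QW: "Q \<subseteq> W"
    and norm: "\<And>q i. q \<in> Q \<Longrightarrow> i \<in> I \<Longrightarrow> inv q \<otimes> i \<otimes> q \<in> I"
  shows "act_on G Q (fixed_points act I Z) act"
proof -
  have "act i (act q z) = act q z"
    if q: "q \<in> Q" and i: "i \<in> I" and z: "z \<in> fixed_points act I Z" for q i z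
  proof -
    have qW: "q \<in> W" and iW: "i \<in> W" using q i IW QW by auto
    have k: "inv q \<otimes> i \<otimes> q \<in> I" by (rule norm[OF q i])
    have kW: "inv q \<otimes> i \<otimes> q \<in> W" using k IW by auto
    have zZ: "z \<in> Z" using z unfolding fixed_points_def by simp
    have "i \<otimes> q = q \<otimes> (inv q \<otimes> i \<otimes> q)" using qW iW W by (simp add: subgroup.mem_carrier m_assoc)
    then have "act i (act q z) = act q (act (inv q \<otimes> i \<otimes> q) z)"
      using act_on_mult[OF act iW qW zZ] act_on_mult[OF act qW kW zZ] by simp
    also have "\<dots> = act q z" using z k unfolding fixed_points_def by simp
    finally show ?thesis .
  qed
  moreover have "act_on G Q Z act" using act_on_mono[OF act QW] .
  ultimately show ?thesis unfolding act_on_def fixed_points_def by auto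
qed

lemma fixed_points_set_mult:
  assumes act: "act_on G W Z act" and I: "subgroup I G" "I \<subseteq> W" and Q: "subgroup Q G" "Q \<subseteq> W"
  shows "fixed_points act Q (fixed_points act I Z) = fixed_points act (I <#> Q) Z"
proof -
  have "act x z = z" if x: "x \<in> I <#> Q" and z: "z \<in> fixed_points act Q (fixed_points act I Z)"
    for x z
  proof -
    obtain i q where iq: "i \<in> I" "q \<in> Q" "x = i \<otimes> q" using x by (rule set_mult_memE)
    then show ?thesis
      using z act_on_mult[OF act, of i q z] I Q unfolding fixed_points_def by auto
  qed
  moreover have "I \<subseteq> I <#> Q" "Q \<subseteq> I <#> Q"
    using subset_set_mult_left subset_set_mult_right I Q subgroup.subset by metis+
  ultimately show ?thesis unfolding fixed_points_def by blast
qed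

lemma card_fixed_points_set_mult_cong:
  assumes p: "Factorial_Ring.prime p" and act: "act_on G W Z act" and W: "subgroup W G"
    and fin: "finite Z" and I: "subgroup I G" "I \<subseteq> W" and Q: "subgroup Q G" "Q \<subseteq> W"
    and cQ: "card Q = p ^ a" and norm: "\<And>q i. q \<in> Q \<Longrightarrow> i \<in> I \<Longrightarrow> inv q \<otimes> i \<otimes> q \<in> I"
  shows "int p dvd int (card (fixed_points act I Z)) - int (card (fixed_points act (I <#> Q) Z))"
  using card_fixed_points_cong_pgroup[OF p Q(1) cQ _
      act_on_fixed_points_normalizing[OF act W I(2) Q(2) norm]]
    fixed_points_set_mult[OF act I Q] fin
  by (simp add: fixed_points_def)

lemma finite_coset_space: "finite W \<Longrightarrow> finite (coset_space G W J)"
  unfolding coset_space_def by simp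

lemma act_on_coset_space:
  assumes W: "subgroup W G" and J: "subgroup J G"
  shows "act_on G W (coset_space G W J) (l_coset G)"
proof -
  have "h <# J \<subseteq> carrier G" if "h \<in> W" for h
    using l_coset_subset_G[OF subgroup.subset[OF J] subgroup.mem_carrier[OF W that]] .
  moreover have "x <# (h <# J) \<in> coset_space G W J" if "x \<in> W" "h \<in> W" for x h
    using that W J unfolding coset_space_def
    by (auto simp: lcos_m_assoc subgroup.subset subgroup.mem_carrier subgroup.m_closed)
  ultimately show ?thesis
    using W unfolding act_on_def coset_space_def
    by (auto simp: lcos_mult_one lcos_m_assoc subgroup.mem_carrier)
qed

lemma fixed_cosets_eq_card_fixed_points:
  "fixed_cosets G W J I = card (fixed_points (l_coset G) I (coset_space G W J))"
  unfolding fixed_cosets_def fixed_points_def by simp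

lemma act_eq_iff_lcos_stabilizer_eq:
  assumes act: "act_on G W Z act" and W: "subgroup W G" and z: "z \<in> Z"
    and h: "h \<in> W" and h': "h' \<in> W"
  shows "act h z = act h' z \<longleftrightarrow> h <# {k\<in>W. act k z = z} = h' <# {k\<in>W. act k z = z}"
  using act_eq_iff_stabilizer[OF act W z h h'] lcos_eq_iff[OF stabilizer_subgroup[OF act W z]] h h' W
  by (simp add: subgroup.mem_carrier subgroup.m_closed subgroup.m_inv_closed)

lemma card_fixed_points_orbit:
  assumes act: "act_on G W Z act" and W: "subgroup W G" and z: "z \<in> Z" and I: "I \<subseteq> W"
  shows "card (fixed_points act I ((\<lambda>h. act h z) ` W)) = fixed_cosets G W {k\<in>W. act k z = z} I"
proof -
  let ?S = "{k\<in>W. act k z = z}"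
  have Sc: "?S \<subseteq> carrier G" using W subgroup.subset by blast
  have fixed_iff: "act i (act h z) = act h z \<longleftrightarrow> i <# (h <# ?S) = h <# ?S"
    if "h \<in> W" "i \<in> I" for h i
    using that I W act_on_mult[OF act _ _ z, of i h] act_eq_iff_lcos_stabilizer_eq[OF act W z, of "i \<otimes> h" h]
    by (auto simp: lcos_m_assoc[OF Sc] subgroup.mem_carrier subgroup.m_closed)
  let ?A = "{h\<in>W. \<forall>i\<in>I. i <# (h <# ?S) = h <# ?S}"
  have "fixed_points act I ((\<lambda>h. act h z) ` W) = (\<lambda>h. act h z) ` ?A"
    using fixed_iff unfolding fixed_points_def by auto
  moreover have "fixed_points (l_coset G) I (coset_space G W ?S) = (\<lambda>h. h <# ?S) ` ?A"
    unfolding fixed_points_def coset_space_def by auto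
  moreover have "card ((\<lambda>h. act h z) ` ?A) = card ((\<lambda>h. h <# ?S) ` ?A)"
    by (rule card_image_eq_if_same_fibers) (simp add: act_eq_iff_lcos_stabilizer_eq[OF act W z])
  ultimately show ?thesis by (simp add: fixed_cosets_eq_card_fixed_points)
qed

lemma fixed_cosets_top:
  assumes W: "subgroup W G" and I: "I \<subseteq> W"
  shows "fixed_cosets G W W I = 1"
proof -
  have "h <# W = W" if "h \<in> W" for h
    using coset_join3[OF subgroup.mem_carrier[OF W that] W that] .
  then have "coset_space G W W = {W}"
    unfolding coset_space_def using subgroup.one_closed[OF W] by blast
  moreover have "\<forall>i\<in>I. i <# W = W" using \<open>\<And>h. h \<in> W \<Longrightarrow> h <# W = W\<close> I by blast
  ultimately have "{C \<in> coset_space G W W. \<forall>i\<in>I. i <# C = C} = {W}" by auto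
  then show ?thesis unfolding fixed_cosets_def by simp
qed

lemma fixed_cosets_proper_eq_0:
  assumes W: "subgroup W G" and I: "subgroup I G" "I \<subseteq> W" "I \<noteq> W"
  shows "fixed_cosets G W I W = 0"
proof -
  have "\<not> (\<forall>x\<in>W. x <# (h <# I) = h <# I)" if h: "h \<in> W" for h
  proof
    assume fixed: "\<forall>x\<in>W. x <# (h <# I) = h <# I"
    have "k \<in> I" if k: "k \<in> W" for k
    proof -
      have c: "h \<in> carrier G" "k \<in> carrier G" using h k W by (auto simp: subgroup.mem_carrier)
      have "h \<otimes> k \<otimes> inv h \<in> W" using h k W by (simp add: subgroup.m_closed subgroup.m_inv_closed)
      then have "(h \<otimes> k \<otimes> inv h) <# (h <# I) = h <# I" using fixed by blast
      then have "inv h \<otimes> (h \<otimes> k \<otimes> inv h) \<otimes> h \<in> I"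
        using lcos_fixed_iff[OF I(1) c(1), of "h \<otimes> k \<otimes> inv h"] c by simp
      then show ?thesis using c by (simp add: m_assoc)
    qed
    then show False using I by blast
  qed
  then have "{C \<in> coset_space G W I. \<forall>x\<in>W. x <# C = C} = {}"
    unfolding coset_space_def by blast
  then show ?thesis unfolding fixed_cosets_def by (simp only: card.empty)
qed

lemma fixed_cosets_self_pos:
  assumes fin: "finite (carrier G)" and W: "subgroup W G" and I: "subgroup I G" "I \<subseteq> W"
  shows "fixed_cosets G W I I > 0"
proof -
  have Ic: "I \<subseteq> carrier G" using I(1) by (rule subgroup.subset)
  have "\<one> <# I \<in> coset_space G W I"
    using subgroup.one_closed[OF W] unfolding coset_space_def by blast
  moreover have "i <# I = I" if "i \<in> I" for i using coset_join3[OF _ I(1) that] that Ic by blast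
  ultimately have "I \<in> {C \<in> coset_space G W I. \<forall>i\<in>I. i <# C = C}"
    using lcos_mult_one[OF Ic] by simp
  moreover have "finite (coset_space G W I)"
    using finite_coset_space finite_subset[OF subgroup.subset[OF W] fin] by blast
  ultimately show ?thesis unfolding fixed_cosets_def by (auto simp: card_gt_0_iff)
qed

end

section \<open>Marks\<close>

lemma mark_add: "mark G W I (\<lambda>J. c J + d J) = mark G W I c + mark G W I d"
  unfolding mark_def by (simp add: sum.distrib distrib_right)

lemma mark_scale: "mark G W I (\<lambda>J. k * c J) = k * mark G W I c"
  unfolding mark_def by (simp add: sum_distrib_left mult.assoc)

lemma mark_sum: "mark G W I (\<lambda>J. \<Sum>a\<in>A. f a J) = (\<Sum>a\<in>A. mark G W I (f a))"
  unfolding mark_def by (simp add: sum_distrib_right sum.swap[of _ A])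

lemma mark_indicator:
  assumes "finite (subgroups_of G W)" "J \<in> subgroups_of G W"
  shows "mark G W I (\<lambda>K. of_bool (K = J)) = int (fixed_cosets G W J I)"
proof -
  have "mark G W I (\<lambda>K. of_bool (K = J))
      = (\<Sum>K\<in>subgroups_of G W. if K = J then int (fixed_cosets G W K I) else 0)"
    unfolding mark_def by (rule sum.cong) auto
  then show ?thesis using assms by (simp add: sum.delta)
qed

context group
begin

lemma finite_subgroups_of: "finite (carrier G) \<Longrightarrow> finite (subgroups_of G W)"
  unfolding subgroups_of_def by (rule finite_subset[of _ "Pow (carrier G)"]) (auto dest: subgroup.subset)

lemma ex_mark_eq_card_fixed_points:
  assumes fin: "finite (carrier G)" and W: "subgroup W G"
    and finZ: "finite Z" and act: "act_on G W Z act"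
  shows "\<exists>c. \<forall>I\<subseteq>W. mark G W I c = int (card (fixed_points act I Z))"
  using finZ act
proof (induction Z rule: finite_psubset_induct)
  case (psubset Z)
  show ?case
  proof (cases "Z = {}")
    case True
    then show ?thesis by (auto simp: mark_def fixed_points_def intro: exI[of _ "\<lambda>_. 0"])
  next
    case False
    then obtain z where z: "z \<in> Z" by auto
    let ?O = "(\<lambda>h. act h z) ` W" and ?S = "{k\<in>W. act k z = z}"
    have Osub: "?O \<subseteq> Z" using act_on_closed[OF psubset.prems _ z] by auto
    have "z \<in> ?O" using act_on_one[OF psubset.prems z] W subgroup.one_closed by force
    then have "Z - ?O \<subset> Z" using z by blast
    then obtain c where c: "\<And>I. I \<subseteq> W \<Longrightarrow> mark G W I c = int (card (fixed_points act I (Z - ?O)))"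
      using psubset.IH act_on_Diff_orbit[OF psubset.prems W z] by blast
    have S: "?S \<in> subgroups_of G W"
      using stabilizer_subgroup[OF psubset.prems W z] unfolding subgroups_of_def by auto
    have "mark G W I (\<lambda>K. c K + of_bool (K = ?S)) = int (card (fixed_points act I Z))"
      if I: "I \<subseteq> W" for I
    proof -
      have "fixed_points act I Z = fixed_points act I (Z - ?O) \<union> fixed_points act I ?O"
        "fixed_points act I (Z - ?O) \<inter> fixed_points act I ?O = {}"
        using Osub unfolding fixed_points_def by auto
      moreover have "finite (fixed_points act I Z)"
        using psubset.hyps unfolding fixed_points_def by simp
      ultimately have "card (fixed_points act I Z)
          = card (fixed_points act I (Z - ?O)) + card (fixed_points act I ?O)"
        by (metis card_Un_disjoint finite_Un)
      then show ?thesis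
        using mark_add[of G W I c] c[OF I] mark_indicator[OF finite_subgroups_of[OF fin] S]
          card_fixed_points_orbit[OF psubset.prems W z I]
        by simp
    qed
    then show ?thesis by blast
  qed
qed

lemma ex_mark_fixed_cosets_mult:
  assumes fin: "finite (carrier G)" and W: "subgroup W G"
    and J: "J \<in> subgroups_of G W" and J': "J' \<in> subgroups_of G W"
  shows "\<exists>e. \<forall>I\<subseteq>W. mark G W I e = int (fixed_cosets G W J I) * int (fixed_cosets G W J' I)"
proof -
  let ?Y = "coset_space G W J" and ?Y' = "coset_space G W J'"
  have act: "act_on G W (?Y \<times> ?Y') (\<lambda>x (C, C'). (x <# C, x <# C'))"
    using act_on_Times act_on_coset_space W J J' unfolding subgroups_of_def by blast
  have "finite (?Y \<times> ?Y')"
    using finite_coset_space finite_subset[OF subgroup.subset[OF W] fin] by blast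
  then show ?thesis
    using ex_mark_eq_card_fixed_points[OF fin W _ act]
    by (simp add: fixed_points_Times card_cartesian_product fixed_cosets_eq_card_fixed_points)
qed

lemma ex_mark_mult:
  assumes fin: "finite (carrier G)" and W: "subgroup W G"
  shows "\<exists>e. \<forall>I\<subseteq>W. mark G W I e = mark G W I c * mark G W I d"
proof -
  let ?S = "subgroups_of G W"
  let ?f = "\<lambda>J I. int (fixed_cosets G W J I)"
  have "\<forall>JJ'\<in>?S \<times> ?S. \<exists>e. \<forall>I\<subseteq>W. mark G W I e = ?f (fst JJ') I * ?f (snd JJ') I"
    using ex_mark_fixed_cosets_mult[OF fin W] by auto
  then obtain E where E: "\<And>J J' I. (J, J') \<in> ?S \<times> ?S \<Longrightarrow> I \<subseteq> W \<Longrightarrow>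
      mark G W I (E (J, J')) = ?f J I * ?f J' I"
    using bchoice[of "?S \<times> ?S"] by (metis fst_conv snd_conv)
  let ?e = "\<lambda>K. \<Sum>(J, J')\<in>?S \<times> ?S. c J * d J' * E (J, J') K"
  have "mark G W I ?e = mark G W I c * mark G W I d" if I: "I \<subseteq> W" for I
  proof -
    have "mark G W I ?e = (\<Sum>(J, J')\<in>?S \<times> ?S. c J * d J' * mark G W I (E (J, J')))"
      by (simp add: case_prod_beta mark_sum mark_scale)
    also have "\<dots> = (\<Sum>(J, J')\<in>?S \<times> ?S. (c J * ?f J I) * (d J' * ?f J' I))"
      by (rule sum.cong) (auto simp: E I)
    also have "\<dots> = mark G W I c * mark G W I d"
      unfolding mark_def sum_product sum.cartesian_product by simp
    finally show ?thesis .
  qed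
  then show ?thesis by blast
qed

lemma mark_cong_set_mult:
  assumes fin: "finite (carrier G)" and p: "Factorial_Ring.prime p" and W: "subgroup W G"
    and I: "subgroup I G" "I \<subseteq> W" and Q: "subgroup Q G" "Q \<subseteq> W" and cQ: "card Q = p ^ a"
    and norm: "\<And>q i. q \<in> Q \<Longrightarrow> i \<in> I \<Longrightarrow> inv q \<otimes> i \<otimes> q \<in> I"
  shows "int p dvd mark G W I c - mark G W (I <#> Q) c"
proof -
  have "mark G W I c - mark G W (I <#> Q) c = (\<Sum>J\<in>subgroups_of G W.
      c J * (int (fixed_cosets G W J I) - int (fixed_cosets G W J (I <#> Q))))"
    unfolding mark_def by (simp add: sum_subtractf right_diff_distrib)
  also have "int p dvd \<dots>"
  proof (rule dvd_sum)
    fix J assume "J \<in> subgroups_of G W"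
    then have "act_on G W (coset_space G W J) (l_coset G)"
      using act_on_coset_space W unfolding subgroups_of_def by blast
    moreover have "finite (coset_space G W J)"
      using finite_coset_space finite_subset[OF subgroup.subset[OF W] fin] by blast
    ultimately have "int p dvd int (fixed_cosets G W J I) - int (fixed_cosets G W J (I <#> Q))"
      using card_fixed_points_set_mult_cong[OF p _ W _ I Q cQ norm]
      by (simp add: fixed_cosets_eq_card_fixed_points)
    then show "int p dvd c J * (int (fixed_cosets G W J I) - int (fixed_cosets G W J (I <#> Q)))"
      by (rule dvd_mult)
  qed
  finally show ?thesis .
qed

lemma ex_mark_separating:
  assumes fin: "finite (carrier G)" and W: "subgroup W G"
    and I: "I \<in> subgroups_of G W" "I \<noteq> W"
  shows "\<exists>c. mark G W I c = 0 \<and> mark G W W c = int (fixed_cosets G W I I)"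
proof -
  have Is: "subgroup I G" "I \<subseteq> W" using I(1) unfolding subgroups_of_def by auto
  have Ws: "W \<in> subgroups_of G W" using W unfolding subgroups_of_def by auto
  note fs = finite_subgroups_of[OF fin]
  let ?d = "int (fixed_cosets G W I I)"
  have m: "mark G W J (\<lambda>K. ?d * of_bool (K = W) + (- 1) * of_bool (K = I))
      = ?d * int (fixed_cosets G W W J) - int (fixed_cosets G W I J)" for J
    by (simp only: mark_add mark_scale mark_indicator[OF fs Ws] mark_indicator[OF fs I(1)])
  have "mark G W I (\<lambda>K. ?d * of_bool (K = W) + (- 1) * of_bool (K = I)) = 0"
    using m[of I] fixed_cosets_top[OF W Is(2)] by simp
  moreover have "mark G W W (\<lambda>K. ?d * of_bool (K = W) + (- 1) * of_bool (K = I)) = ?d"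
    using m[of W] fixed_cosets_top[OF W] fixed_cosets_proper_eq_0[OF W Is I(2)] by simp
  ultimately show ?thesis by blast
qed

end

section \<open>The subgroup \<open>O\<^sup>p\<close>\<close>

definition normal_pindex :: "('a, 'b) monoid_scheme \<Rightarrow> nat \<Rightarrow> 'a set \<Rightarrow> 'a set \<Rightarrow> bool" where
  "normal_pindex G p H N \<longleftrightarrow> subgroup N G \<and> N \<subseteq> H
     \<and> (\<forall>h\<in>H. \<forall>n\<in>N. h \<otimes>\<^bsub>G\<^esub> n \<otimes>\<^bsub>G\<^esub> inv\<^bsub>G\<^esub> h \<in> N) \<and> (\<exists>k. card H = p ^ k * card N)"

context group
begin

lemma normal_pindexD:
  assumes "normal_pindex G p H N"
  shows "subgroup N G" "N \<subseteq> H" "\<And>h n. h \<in> H \<Longrightarrow> n \<in> N \<Longrightarrow> h \<otimes> n \<otimes> inv h \<in> N"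
    "\<exists>k. card H = p ^ k * card N"
  using assms unfolding normal_pindex_def by auto

lemma normal_pindex_self: "subgroup H G \<Longrightarrow> normal_pindex G p H H"
  unfolding normal_pindex_def by (auto intro!: exI[of _ 0] subgroup.m_closed subgroup.m_inv_closed)

lemma Op_eq_Inter:
  assumes H: "subgroup H G"
  shows "Op G p H = \<Inter>{N. normal_pindex G p H N}"
proof -
  interpret H: group "G\<lparr>carrier := H\<rparr>" by (rule subgroup_imp_group[OF H])
  have "N \<lhd> G\<lparr>carrier := H\<rparr> \<longleftrightarrow>
      subgroup N (G\<lparr>carrier := H\<rparr>) \<and> (\<forall>h\<in>H. \<forall>n\<in>N. h \<otimes> n \<otimes> inv h \<in> N)" for N
    using H.normal_inv_iff[of N] H by simp
  moreover have "N \<subseteq> H \<and> subgroup N (G\<lparr>carrier := H\<rparr>) \<longleftrightarrow> subgroup N G \<and> N \<subseteq> H" for N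
    using subgroup_incl[OF _ H, of N] incl_subgroup[OF H, of N] subgroup.subset[of N "G\<lparr>carrier := H\<rparr>"]
    by auto
  ultimately have "{N. N \<subseteq> H \<and> N \<lhd> G\<lparr>carrier := H\<rparr> \<and> (\<exists>k. card H = p ^ k * card N)}
      = {N. normal_pindex G p H N}"
    unfolding normal_pindex_def by blast
  then show ?thesis unfolding Op_def by simp
qed

lemma Op_subset_normal_pindex: "subgroup H G \<Longrightarrow> normal_pindex G p H N \<Longrightarrow> Op G p H \<subseteq> N"
  unfolding Op_eq_Inter by auto

lemma card_eq_prime_power_mult_card_Int:
  assumes fin: "finite (carrier G)" and p: "Factorial_Ring.prime p" and H: "subgroup H G"
    and A: "subgroup A G" "A \<subseteq> H" and N: "normal_pindex G p H N"
  shows "\<exists>i. card A = p ^ i * card (A \<inter> N)"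
proof -
  note N' = normal_pindexD[OF N]
  obtain k where k: "card H = p ^ k * card N" using N'(4) by blast
  have norm: "\<And>a n. a \<in> A \<Longrightarrow> n \<in> N \<Longrightarrow> inv a \<otimes> n \<otimes> a \<in> N"
    using normalizes_inv[OF H N'(3)] A(2) by blast
  have NA: "subgroup (N <#> A) G" by (rule subgroup_set_mult_normalizing[OF N'(1) A(1) norm])
  have "card N dvd card (N <#> A)"
    using card_subgroup_dvd[OF N'(1) NA] subset_set_mult_left[OF A(1)] N'(1) subgroup.subset by metis
  moreover have "card (N <#> A) dvd card H"
    by (rule card_subgroup_dvd[OF NA H set_mult_subset_subgroup[OF H N'(2) A(2)]])
  moreover have "card N > 0"
    using finite_subset[OF subgroup.subset[OF N'(1)] fin] subgroup.one_closed[OF N'(1)]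
    by (auto simp: card_gt_0_iff)
  ultimately obtain i where i: "card (N <#> A) = p ^ i * card N"
    using prime_power_cofactor[OF p] k by metis
  have "card N * card A = card (N <#> A) * card (N \<inter> A)"
    using card_set_mult_mult_card_Int[OF fin N'(1) A(1)] by simp
  also have "\<dots> = card N * (p ^ i * card (A \<inter> N))" using i by (simp add: Int_commute)
  finally have "card A = p ^ i * card (A \<inter> N)" using \<open>card N > 0\<close> by simp
  then show ?thesis by blast
qed

lemma normal_pindex_Int:
  assumes fin: "finite (carrier G)" and p: "Factorial_Ring.prime p" and H: "subgroup H G"
    and A: "normal_pindex G p H A" and B: "normal_pindex G p H B"
  shows "normal_pindex G p H (A \<inter> B)"
proof -
  obtain i where i: "card A = p ^ i * card (A \<inter> B)"
    using card_eq_prime_power_mult_card_Int[OF fin p H normal_pindexD(1,2)[OF A] B] by blast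
  obtain k where k: "card H = p ^ k * card A" using normal_pindexD(4)[OF A] by blast
  have "card H = p ^ (k + i) * card (A \<inter> B)" using i k by (simp add: power_add)
  moreover have "subgroup (A \<inter> B) G"
    using subgroups_Inter_pair normal_pindexD(1) A B by blast
  ultimately show ?thesis
    using normal_pindexD(2,3)[OF A] normal_pindexD(3)[OF B] unfolding normal_pindex_def by blast
qed

lemma normal_pindex_Inter:
  assumes fin: "finite (carrier G)" and p: "Factorial_Ring.prime p" and H: "subgroup H G"
    and F: "finite F" "F \<noteq> {}" "\<And>N. N \<in> F \<Longrightarrow> normal_pindex G p H N"
  shows "normal_pindex G p H (\<Inter>F)"
  using F
proof (induction F rule: finite_ne_induct)
  case (insert N F)
  then show ?case using normal_pindex_Int[OF fin p H] by simp
qed simp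

lemma normal_pindex_Op:
  assumes fin: "finite (carrier G)" and p: "Factorial_Ring.prime p" and H: "subgroup H G"
  shows "normal_pindex G p H (Op G p H)"
proof -
  have "{N. normal_pindex G p H N} \<subseteq> Pow H" unfolding normal_pindex_def by auto
  then have "finite {N. normal_pindex G p H N}"
    using finite_subset[OF subgroup.subset[OF H] fin] by (meson finite_Pow_iff finite_subset)
  then show ?thesis
    unfolding Op_eq_Inter[OF H] using normal_pindex_Inter[OF fin p H] normal_pindex_self[OF H] by blast
qed

lemma subgroup_Op:
  "finite (carrier G) \<Longrightarrow> Factorial_Ring.prime p \<Longrightarrow> subgroup H G \<Longrightarrow> subgroup (Op G p H) G"
  and Op_subset:
  "finite (carrier G) \<Longrightarrow> Factorial_Ring.prime p \<Longrightarrow> subgroup H G \<Longrightarrow> Op G p H \<subseteq> H"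
  using normal_pindexD(1,2)[OF normal_pindex_Op] by blast+

lemma Op_mono:
  assumes fin: "finite (carrier G)" and p: "Factorial_Ring.prime p" and H: "subgroup H G"
    and I: "subgroup I G" "I \<subseteq> H"
  shows "Op G p I \<subseteq> Op G p H"
proof -
  let ?O = "Op G p H"
  have O: "normal_pindex G p H ?O" by (rule normal_pindex_Op[OF fin p H])
  have "subgroup (I \<inter> ?O) G" using subgroups_Inter_pair I(1) normal_pindexD(1)[OF O] by blast
  moreover have "h \<otimes> x \<otimes> inv h \<in> I \<inter> ?O" if "h \<in> I" "x \<in> I \<inter> ?O" for h x
    using that I normal_pindexD(3)[OF O] by (auto simp: subgroup.m_closed subgroup.m_inv_closed)
  ultimately have "normal_pindex G p I (I \<inter> ?O)"
    using card_eq_prime_power_mult_card_Int[OF fin p H I O] unfolding normal_pindex_def by blast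
  then show ?thesis using Op_subset_normal_pindex[OF I(1)] by blast
qed

lemma normal_pindex_conj:
  assumes g: "g \<in> carrier G" and Mc: "M \<subseteq> carrier G" and N: "normal_pindex G p M N"
  shows "normal_pindex G p ((g <# M) #> inv g) ((g <# N) #> inv g)"
proof -
  note N' = normal_pindexD[OF N]
  have Nc: "N \<subseteq> carrier G" using N'(2) Mc by blast
  have "x \<otimes> y \<otimes> inv x \<in> (g <# N) #> inv g"
    if x: "x \<in> (g <# M) #> inv g" and y: "y \<in> (g <# N) #> inv g" for x y
  proof -
    obtain m where m: "m \<in> M" "x = g \<otimes> m \<otimes> inv g" using x by (rule conj_memE)
    obtain n where n: "n \<in> N" "y = g \<otimes> n \<otimes> inv g" using y by (rule conj_memE)
    have "m \<in> carrier G" "n \<in> carrier G" using m(1) n(1) Mc Nc by auto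
    then have "x \<otimes> y \<otimes> inv x = g \<otimes> (m \<otimes> n \<otimes> inv m) \<otimes> inv g"
      using m(2) n(2) g by (simp add: m_assoc inv_mult_group)
    then show ?thesis using conj_memI N'(3)[OF m(1) n(1)] by simp
  qed
  moreover have "\<exists>k. card ((g <# M) #> inv g) = p ^ k * card ((g <# N) #> inv g)"
    using N'(4) card_conj[OF Mc g] card_conj[OF Nc g] by simp
  ultimately show ?thesis
    unfolding normal_pindex_def using subgroup_conjugation_is_surj2[OF g N'(1)] conj_mono[OF N'(2)]
    by blast
qed

lemma conj_normalizing_eq:
  assumes H: "subgroup H G" and M: "subgroup M G" and h: "h \<in> H"
    and norm: "\<And>h m. h \<in> H \<Longrightarrow> m \<in> M \<Longrightarrow> h \<otimes> m \<otimes> inv h \<in> M"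
  shows "(h <# M) #> inv h = M"
proof
  show "(h <# M) #> inv h \<subseteq> M" using norm h by (auto elim: conj_memE)
  show "M \<subseteq> (h <# M) #> inv h"
  proof
    fix m assume m: "m \<in> M"
    have "m = h \<otimes> (inv h \<otimes> m \<otimes> h) \<otimes> inv h"
      using m h H M by (simp add: m_assoc subgroup.mem_carrier)
    then show "m \<in> (h <# M) #> inv h" using conj_memI[OF normalizes_inv[OF H norm h m]] by metis
  qed
qed

lemma Op_conj:
  assumes I: "subgroup I G" and g: "g \<in> carrier G"
  shows "(g <# Op G p I) #> inv g \<subseteq> Op G p ((g <# I) #> inv g)"
proof -
  have Ic: "I \<subseteq> carrier G" using I by (rule subgroup.subset)
  have gI: "subgroup ((g <# I) #> inv g) G" by (rule subgroup_conjugation_is_surj2[OF g I])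
  have "(g <# Op G p I) #> inv g \<subseteq> N" if N: "normal_pindex G p ((g <# I) #> inv g) N" for N
  proof -
    have Nc: "N \<subseteq> carrier G" using normal_pindexD(1)[OF N] subgroup.subset by blast
    have "normal_pindex G p I ((inv g <# N) #> inv (inv g))"
      using normal_pindex_conj[OF inv_closed[OF g] subgroup.subset[OF gI] N] conj_inv_conj[OF Ic g]
      by simp
    then have "(g <# Op G p I) #> inv g \<subseteq> (g <# ((inv g <# N) #> inv (inv g))) #> inv g"
      by (intro conj_mono Op_subset_normal_pindex[OF I])
    also have "\<dots> = N" using conj_conj[OF Nc g inv_closed[OF g]] conj_one[OF Nc] g by simp
    finally show ?thesis .
  qed
  then show ?thesis unfolding Op_eq_Inter[OF gI] by blast
qed

lemma normalizes_Inter_conj: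
  assumes H: "subgroup H G" and N: "N \<subseteq> carrier G"
    and y: "y \<in> H" and c: "c \<in> \<Inter>((\<lambda>h. (h <# N) #> inv h) ` H)"
  shows "y \<otimes> c \<otimes> inv y \<in> \<Inter>((\<lambda>h. (h <# N) #> inv h) ` H)"
proof (rule InterI)
  fix S assume "S \<in> (\<lambda>h. (h <# N) #> inv h) ` H"
  then obtain h where h: "h \<in> H" "S = (h <# N) #> inv h" by auto
  have "inv y \<otimes> h \<in> H" using y h H by (simp add: subgroup.m_closed subgroup.m_inv_closed)
  then have "c \<in> ((inv y \<otimes> h) <# N) #> inv (inv y \<otimes> h)" using c by blast
  then obtain n where n: "n \<in> N" "c = (inv y \<otimes> h) \<otimes> n \<otimes> inv (inv y \<otimes> h)"
    by (rule conj_memE)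
  have "y \<in> carrier G" "h \<in> carrier G" "n \<in> carrier G"
    using n(1) y h H N by (auto simp: subgroup.mem_carrier)
  then have "y \<otimes> c \<otimes> inv y = h \<otimes> n \<otimes> inv h" using n(2) by (simp add: m_assoc inv_mult_group)
  then show "y \<otimes> c \<otimes> inv y \<in> S" using h conj_memI[OF n(1)] by simp
qed

lemma Op_idem:
  assumes fin: "finite (carrier G)" and p: "Factorial_Ring.prime p" and H: "subgroup H G"
  shows "Op G p (Op G p H) = Op G p H"
proof -
  let ?P = "Op G p H"
  have P: "normal_pindex G p H ?P" by (rule normal_pindex_Op[OF fin p H])
  note P' = normal_pindexD[OF P]
  have "?P \<subseteq> N" if N: "normal_pindex G p ?P N" for N
  proof -
    \<comment> \<open>The core of \<open>N\<close> in \<open>H\<close> is normal of \<open>p\<close>-power index in \<open>H\<close>, so it contains \<open>O^p(H)\<close>.\<close>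
    let ?C = "\<Inter>((\<lambda>h. (h <# N) #> inv h) ` H)"
    have Nc: "N \<subseteq> carrier G" using normal_pindexD(1)[OF N] subgroup.subset by blast
    have "normal_pindex G p ?P ((h <# N) #> inv h)" if h: "h \<in> H" for h
    proof -
      have "normal_pindex G p ((h <# ?P) #> inv h) ((h <# N) #> inv h)"
        using normal_pindex_conj[OF _ subgroup.subset[OF P'(1)] N] h H by (simp add: subgroup.mem_carrier)
      then show ?thesis using conj_normalizing_eq[OF H P'(1) h P'(3)] by simp
    qed
    moreover have "finite ((\<lambda>h. (h <# N) #> inv h) ` H)"
      using finite_subset[OF subgroup.subset[OF H] fin] by blast
    moreover have "(\<lambda>h. (h <# N) #> inv h) ` H \<noteq> {}" using subgroup.one_closed[OF H] by blast
    ultimately have C: "normal_pindex G p ?P ?C"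
      using normal_pindex_Inter[OF fin p P'(1)] by blast
    obtain k where k: "card H = p ^ k * card ?P" using P'(4) by blast
    obtain l where l: "card ?P = p ^ l * card ?C" using normal_pindexD(4)[OF C] by blast
    have "card H = p ^ (k + l) * card ?C" unfolding k l power_add by (rule mult.assoc[symmetric])
    moreover have "?C \<subseteq> H" using normal_pindexD(2)[OF C] P'(2) by (rule order_trans)
    ultimately have "normal_pindex G p H ?C"
      using normal_pindexD(1)[OF C] normalizes_Inter_conj[OF H Nc]
      unfolding normal_pindex_def by blast
    then have "?P \<subseteq> ?C" by (rule Op_subset_normal_pindex[OF H])
    also have "?C \<subseteq> (\<one> <# N) #> inv \<one>" using subgroup.one_closed[OF H] by blast
    finally show ?thesis using conj_one[OF Nc] by simp
  qed
  then have "?P \<subseteq> Op G p ?P" unfolding Op_eq_Inter[OF P'(1)] by blast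
  then show ?thesis using Op_subset[OF fin p P'(1)] by blast
qed

lemma subconj_Op:
  assumes fin: "finite (carrier G)" and p: "Factorial_Ring.prime p" and H: "subgroup H G"
    and I: "subgroup I G" and IH: "subconj G I H"
  shows "subconj G (Op G p I) (Op G p H)"
proof -
  obtain g where g: "g \<in> carrier G" "(g <# I) #> inv g \<subseteq> H" using IH unfolding subconj_def by blast
  have "(g <# Op G p I) #> inv g \<subseteq> Op G p ((g <# I) #> inv g)" by (rule Op_conj[OF I g(1)])
  also have "\<dots> \<subseteq> Op G p H" by (rule Op_mono[OF fin p H subgroup_conjugation_is_surj2[OF g(1) I] g(2)])
  finally show ?thesis unfolding subconj_def using g(1) by blast
qed

lemma subconj_Op_iff:
  assumes fin: "finite (carrier G)" and p: "Factorial_Ring.prime p"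
    and H: "subgroup H G" and K: "subgroup K G"
  shows "subconj G (Op G p H) K \<longleftrightarrow> subconj G (Op G p H) (Op G p K)"
proof
  assume "subconj G (Op G p H) K"
  then show "subconj G (Op G p H) (Op G p K)"
    using subconj_Op[OF fin p K subgroup_Op[OF fin p H]] Op_idem[OF fin p H] by simp
qed (rule subconj_mono_right[OF _ Op_subset[OF fin p K]])

lemma normal_pindex_set_mult_sylow:
  assumes fin: "finite (carrier G)" and p: "Factorial_Ring.prime p" and I: "subgroup I G"
    and N: "normal_pindex G p I N" and S: "subgroup S G" "S \<subseteq> I"
    and cS: "card S = p ^ multiplicity p (card I)"
  shows "N <#> S = I"
proof -
  note N' = normal_pindexD[OF N]
  have norm: "\<And>s x. s \<in> S \<Longrightarrow> x \<in> N \<Longrightarrow> inv s \<otimes> x \<otimes> s \<in> N"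
    using normalizes_inv[OF I N'(3)] S(2) by blast
  have NS: "subgroup (N <#> S) G" by (rule subgroup_set_mult_normalizing[OF N'(1) S(1) norm])
  have NSI: "N <#> S \<subseteq> I" by (rule set_mult_subset_subgroup[OF I N'(2) S(2)])
  have fI: "finite I" using finite_subset[OF subgroup.subset[OF I] fin] .
  have "card I \<noteq> 0" using fI subgroup.one_closed[OF I] by auto
  moreover obtain k where "card I = p ^ k * card N" using N'(4) by blast
  moreover have "card N dvd card (N <#> S)"
    using card_subgroup_dvd[OF N'(1) NS] subset_set_mult_left[OF S(1)] N'(1) subgroup.subset by metis
  moreover have "card S dvd card (N <#> S)"
    using card_subgroup_dvd[OF S(1) NS] subset_set_mult_right[OF N'(1)] S(1) subgroup.subset by metis
  ultimately have "card I dvd card (N <#> S)"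
    using dvd_if_multiplicity_part_dvd[OF p] cS by metis
  moreover have "card (N <#> S) \<noteq> 0"
    using finite_subset[OF NSI fI] subgroup.one_closed[OF NS] by (auto simp: card_eq_0_iff)
  ultimately have "card I \<le> card (N <#> S)" by (simp add: dvd_imp_le)
  then show ?thesis using NSI fI by (simp add: card_seteq)
qed

lemma mark_cong_Op:
  assumes fin: "finite (carrier G)" and p: "Factorial_Ring.prime p" and W: "subgroup W G"
    and I: "subgroup I G" "I \<subseteq> W"
  shows "int p dvd mark G W I c - mark G W (Op G p I) c"
proof -
  let ?O = "Op G p I"
  have O: "normal_pindex G p I ?O" by (rule normal_pindex_Op[OF fin p I(1)])
  obtain S where S: "subgroup S G" "S \<subseteq> I" "card S = p ^ multiplicity p (card I)"
    using ex_subgroup_card_prime_power[OF fin I(1) p multiplicity_dvd] by blast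
  have "int p dvd mark G W ?O c - mark G W (?O <#> S) c"
    using mark_cong_set_mult[OF fin p W normal_pindexD(1)[OF O] _ S(1) _ S(3)]
      normalizes_inv[OF I(1) normal_pindexD(3)[OF O]] normal_pindexD(2)[OF O] S(2) I(2)
    by blast
  then show ?thesis
    using normal_pindex_set_mult_sylow[OF fin p I(1) O S] by (simp add: dvd_diff_commute)
qed

end

section \<open>Elements separating a subgroup from its proper subgroups\<close>

context group
begin

lemma mem_normalizer_iff:
  assumes fin: "finite I" and Ic: "I \<subseteq> carrier G" and h: "h \<in> carrier G"
  shows "h \<in> normalizer G I \<longleftrightarrow> (\<forall>i\<in>I. inv h \<otimes> i \<otimes> h \<in> I)"
proof -
  have "h \<in> normalizer G I \<longleftrightarrow> (h <# I) #> inv h = I"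
    using Ic h unfolding normalizer_def stabilizer_def by simp
  also have "\<dots> \<longleftrightarrow> (inv h <# I) #> inv (inv h) \<subseteq> I"
  proof
    assume "(h <# I) #> inv h = I"
    then show "(inv h <# I) #> inv (inv h) \<subseteq> I" using conj_inv_conj[OF Ic h] by simp
  next
    assume "(inv h <# I) #> inv (inv h) \<subseteq> I"
    then have "(inv h <# I) #> inv (inv h) = I"
      using card_conj[OF Ic inv_closed[OF h]] fin by (simp add: card_subset_eq)
    then show "(h <# I) #> inv h = I"
      using conj_conj[OF Ic h inv_closed[OF h]] conj_one[OF Ic] h by simp
  qed
  also have "\<dots> \<longleftrightarrow> (\<forall>i\<in>I. inv h \<otimes> i \<otimes> h \<in> I)" using h by (auto simp: conj_eq_image)
  finally show ?thesis .
qed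

lemma lcos_fixed_iff_mem_normalizer:
  assumes fin: "finite I" and I: "subgroup I G" and h: "h \<in> carrier G"
  shows "(\<forall>i\<in>I. i <# (h <# I) = h <# I) \<longleftrightarrow> h \<in> normalizer G I"
proof -
  have Ic: "I \<subseteq> carrier G" using I by (rule subgroup.subset)
  have "(\<forall>i\<in>I. i <# (h <# I) = h <# I) \<longleftrightarrow> (\<forall>i\<in>I. inv h \<otimes> i \<otimes> h \<in> I)"
    using lcos_fixed_iff[OF I h] Ic by blast
  also have "\<dots> \<longleftrightarrow> h \<in> normalizer G I" using mem_normalizer_iff[OF fin Ic h] by simp
  finally show ?thesis .
qed

lemma card_normalizer_Int:
  assumes fin: "finite (carrier G)" and P: "subgroup P G" and I: "subgroup I G" "I \<subseteq> P"
  shows "card (P \<inter> normalizer G I) = fixed_cosets G P I I * card I"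
proof -
  let ?N = "P \<inter> normalizer G I"
  have Pc: "P \<subseteq> carrier G" and Ic: "I \<subseteq> carrier G" using P I subgroup.subset by blast+
  have fixed_iff: "(\<forall>i\<in>I. i <# (h <# I) = h <# I) \<longleftrightarrow> h \<in> normalizer G I" if "h \<in> P" for h
    using lcos_fixed_iff_mem_normalizer[OF finite_subset[OF Ic fin] I(1)] that Pc by blast
  have "fixed_cosets G P I I = card ((\<lambda>h. h <# I) ` ?N)"
    unfolding fixed_cosets_def coset_space_def using fixed_iff
    by (intro arg_cong[where f = card]) auto
  moreover have "card ?N = card ((\<lambda>h. h <# I) ` ?N) * card I"
  proof (rule card_eq_card_image_mult)
    show "finite ?N" using finite_subset[OF Pc fin] by blast
    fix b assume "b \<in> (\<lambda>h. h <# I) ` ?N"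
    then obtain h where h: "h \<in> ?N" "b = h <# I" by blast
    have hc: "h \<in> carrier G" using h Pc by auto
    have "{a \<in> ?N. a <# I = b} = h <# I"
    proof (intro equalityI subsetI)
      fix a assume "a \<in> {a \<in> ?N. a <# I = b}"
      then show "a \<in> h <# I" using h lcos_self[OF _ I(1)] Pc by auto
    next
      fix a assume a: "a \<in> h <# I"
      then have eq: "h <# I = a <# I" by (rule l_repr_independence[OF _ hc I(1)])
      have aP: "a \<in> P" using a h I(2) P by (auto simp: l_coset_def subgroup.m_closed)
      have "\<forall>i\<in>I. i <# (a <# I) = a <# I" using fixed_iff[of h] h eq by simp
      then show "a \<in> {a \<in> ?N. a <# I = b}" using fixed_iff[OF aP] aP h eq by simp
    qed
    moreover have "h <# I \<in> lcosets I" using hc unfolding LCOSETS_def by blast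
    ultimately show "card {a \<in> ?N. a <# I = b} = card I"
      using l_card_cosets_equal[OF _ Ic fin] by simp
  qed
  ultimately show ?thesis by simp
qed

lemma ex_pgroup_normalizing_not_subset:
  assumes fin: "finite (carrier G)" and p: "Factorial_Ring.prime p" and P: "subgroup P G"
    and I: "subgroup I G" "I \<subseteq> P" and pd: "p dvd fixed_cosets G P I I"
  shows "\<exists>Q a. subgroup Q G \<and> Q \<subseteq> P \<and> card Q = p ^ a
    \<and> (\<forall>q\<in>Q. \<forall>i\<in>I. inv q \<otimes> i \<otimes> q \<in> I) \<and> \<not> Q \<subseteq> I"
proof -
  let ?N = "P \<inter> normalizer G I"
  have Ic: "I \<subseteq> carrier G" using I(1) subgroup.subset by blast
  have N: "subgroup ?N G" using subgroups_Inter_pair[OF P normalizer_imp_subgroup[OF Ic]] .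
  let ?v = "multiplicity p (card ?N)"
  obtain Q where Q: "subgroup Q G" "Q \<subseteq> ?N" "card Q = p ^ ?v"
    by (rule ex_subgroup_card_prime_power[OF fin N p multiplicity_dvd])
  have "inv q \<otimes> i \<otimes> q \<in> I" if q: "q \<in> Q" and i: "i \<in> I" for q i
  proof -
    have "q \<in> normalizer G I" "q \<in> carrier G" using q Q(2) subgroup.mem_carrier[OF N] by auto
    then show ?thesis using mem_normalizer_iff[OF finite_subset[OF Ic fin] Ic] i by blast
  qed
  moreover have "\<not> Q \<subseteq> I"
  proof
    assume "Q \<subseteq> I"
    then have "p ^ ?v dvd card I" using card_subgroup_dvd[OF Q(1) I(1)] Q(3) by simp
    moreover have "p * card I dvd card ?N"
      using card_normalizer_Int[OF fin P I] mult_dvd_mono[OF pd dvd_refl] by simp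
    moreover have "p ^ Suc ?v dvd p * card I"
      using \<open>p ^ ?v dvd card I\<close> by (simp add: mult_dvd_mono)
    ultimately have "p ^ Suc ?v dvd card ?N" by (metis dvd_trans)
    moreover have "card ?N \<noteq> 0"
      using finite_subset[OF subgroup.subset[OF N] fin] subgroup.one_closed[OF N] by auto
    moreover have "\<not> is_unit p" using p by (simp add: prime_nat_iff)
    ultimately have "Suc ?v \<le> ?v" using power_dvd_iff_le_multiplicity by blast
    then show False by simp
  qed
  ultimately show ?thesis using Q by blast
qed

lemma normal_pindex_of_set_mult_eq:
  assumes fin: "finite (carrier G)" and p: "Factorial_Ring.prime p" and P: "subgroup P G"
    and I: "subgroup I G" "I \<subseteq> P" and Q: "subgroup Q G" "card Q = p ^ a"
    and norm: "\<And>q i. q \<in> Q \<Longrightarrow> i \<in> I \<Longrightarrow> inv q \<otimes> i \<otimes> q \<in> I" and eq: "I <#> Q = P"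
  shows "normal_pindex G p P I"
proof -
  have Ic: "I \<subseteq> carrier G" and Qc: "Q \<subseteq> carrier G" using I(1) Q(1) subgroup.subset by blast+
  have "h \<otimes> i \<otimes> inv h \<in> I" if h: "h \<in> P" and i: "i \<in> I" for h i
  proof -
    obtain j q where jq: "j \<in> I" "q \<in> Q" "h = j \<otimes> q" using h eq by (auto elim: set_mult_memE)
    have c: "j \<in> carrier G" "q \<in> carrier G" "i \<in> carrier G" using jq i Ic Qc by auto
    have "inv (inv q) \<otimes> i \<otimes> inv q \<in> I" using norm Q(1) jq(2) i by (simp add: subgroup.m_inv_closed)
    then have "j \<otimes> (q \<otimes> i \<otimes> inv q) \<otimes> inv j \<in> I"
      using jq(1) I(1) c by (simp add: subgroup.m_closed subgroup.m_inv_closed)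
    moreover have "h \<otimes> i \<otimes> inv h = j \<otimes> (q \<otimes> i \<otimes> inv q) \<otimes> inv j"
      using jq(3) c by (simp add: m_assoc inv_mult_group)
    ultimately show ?thesis by simp
  qed
  moreover have "\<exists>k. card P = p ^ k * card I"
  proof -
    have "card (I \<inter> Q) dvd card Q"
      using card_subgroup_dvd[OF subgroups_Inter_pair[OF I(1) Q(1)] Q(1)] by blast
    then obtain b where "card (I \<inter> Q) = p ^ b" using Q(2) divides_primepow_nat[OF p] by auto
    then have "card P * p ^ b = card I * p ^ a"
      using card_set_mult_mult_card_Int[OF fin I(1) Q(1)] eq Q(2) by simp
    then have "card P dvd p ^ a * card I" by (metis dvd_triv_left mult.commute)
    moreover have "card I > 0"
      using finite_subset[OF Ic fin] subgroup.one_closed[OF I(1)] by (auto simp: card_gt_0_iff)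
    ultimately show ?thesis
      using prime_power_cofactor[OF p _ card_subgroup_dvd[OF I(1) P I(2)]] by blast
  qed
  ultimately show ?thesis using I unfolding normal_pindex_def by blast
qed

lemma ex_larger_subgroup_mark_cong:
  assumes fin: "finite (carrier G)" and p: "Factorial_Ring.prime p" and P: "subgroup P G"
    and perfect: "Op G p P = P" and I: "subgroup I G" "I \<subseteq> P" "I \<noteq> P"
    and pd: "p dvd fixed_cosets G P I I"
  shows "\<exists>I'. I' \<in> subgroups_of G P \<and> I' \<noteq> P \<and> card I < card I'
    \<and> (\<forall>c. int p dvd mark G P I c - mark G P I' c)"
proof -
  obtain Q a where Q: "subgroup Q G" "Q \<subseteq> P" "card Q = p ^ a"
    and norm': "\<forall>q\<in>Q. \<forall>i\<in>I. inv q \<otimes> i \<otimes> q \<in> I" and "\<not> Q \<subseteq> I"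
    using ex_pgroup_normalizing_not_subset[OF fin p P I(1,2) pd] by blast
  have norm: "\<And>q i. q \<in> Q \<Longrightarrow> i \<in> I \<Longrightarrow> inv q \<otimes> i \<otimes> q \<in> I" using norm' by blast
  let ?I' = "I <#> Q"
  have I's: "subgroup ?I' G" by (rule subgroup_set_mult_normalizing[OF I(1) Q(1) norm])
  have I'P: "?I' \<subseteq> P" by (rule set_mult_subset_subgroup[OF P I(2) Q(2)])
  have "I \<subseteq> ?I'" using subset_set_mult_left[OF Q(1) subgroup.subset[OF I(1)]] .
  moreover have "Q \<subseteq> ?I'" using subset_set_mult_right[OF I(1) subgroup.subset[OF Q(1)]] .
  ultimately have "I \<subset> ?I'" using \<open>\<not> Q \<subseteq> I\<close> by blast
  then have "card I < card ?I'"
    using psubset_card_mono finite_subset[OF I'P finite_subset[OF subgroup.subset[OF P] fin]] by blast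
  moreover have "?I' \<noteq> P"
  proof
    assume eq: "?I' = P"
    have "normal_pindex G p P I" by (rule normal_pindex_of_set_mult_eq[OF fin p P I(1,2) Q(1,3) norm eq])
    then show False using Op_subset_normal_pindex[OF P] perfect I(2,3) by blast
  qed
  moreover have "?I' \<in> subgroups_of G P" using I's I'P unfolding subgroups_of_def by blast
  moreover have "int p dvd mark G P I c - mark G P ?I' c" for c
    by (rule mark_cong_set_mult[OF fin p P I(1,2) Q(1,2,3) norm])
  ultimately show ?thesis by blast
qed

lemma ex_mark_dvd_separating_prime:
  assumes fin: "finite (carrier G)" and p: "Factorial_Ring.prime p" and P: "subgroup P G"
    and perfect: "Op G p P = P"
  shows "I \<in> subgroups_of G P \<Longrightarrow> I \<noteq> P \<Longrightarrow>
    \<exists>c. int p dvd mark G P I c \<and> \<not> int p dvd mark G P P c"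
proof (induction "card P - card I" arbitrary: I rule: less_induct)
  case less
  have I: "subgroup I G" "I \<subseteq> P" using less.prems(1) unfolding subgroups_of_def by auto
  show ?case
  proof (cases "p dvd fixed_cosets G P I I")
    case False
    obtain c where "mark G P I c = 0" "mark G P P c = int (fixed_cosets G P I I)"
      using ex_mark_separating[OF fin P less.prems] by blast
    then show ?thesis using False by (intro exI[of _ c]) simp
  next
    case True
    then obtain I' where I': "I' \<in> subgroups_of G P" "I' \<noteq> P" "card I < card I'"
      and cong: "\<And>c. int p dvd mark G P I c - mark G P I' c"
      using ex_larger_subgroup_mark_cong[OF fin p P perfect I less.prems(2)] by blast
    have "card I' \<le> card P"
      using I'(1) card_mono finite_subset[OF subgroup.subset[OF P] fin]
      unfolding subgroups_of_def by blast
    then have "card P - card I' < card P - card I" using I'(3) by linarith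
    then obtain c where c: "int p dvd mark G P I' c" "\<not> int p dvd mark G P P c"
      using less.hyps I'(1,2) by blast
    from dvd_add[OF cong[of c] c(1)] have "int p dvd mark G P I c" by simp
    then show ?thesis using c(2) by blast
  qed
qed

lemma ex_mark_separating_prime:
  assumes fin: "finite (carrier G)" and p: "Factorial_Ring.prime p" and P: "subgroup P G"
    and perfect: "Op G p P = P" and I: "I \<in> subgroups_of G P" "I \<noteq> P"
  shows "\<exists>c. mark G P I c = 0 \<and> \<not> int p dvd mark G P P c"
proof -
  obtain c where c: "int p dvd mark G P I c" "\<not> int p dvd mark G P P c"
    using ex_mark_dvd_separating_prime[OF fin p P perfect I] by blast
  have Ps: "P \<in> subgroups_of G P" using P unfolding subgroups_of_def by auto
  let ?m = "mark G P I c"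
  have m: "mark G P J (\<lambda>K. c K + (- ?m) * of_bool (K = P)) = mark G P J c - ?m" if "J \<subseteq> P" for J
  proof -
    have "mark G P J (\<lambda>K. c K + (- ?m) * of_bool (K = P))
        = mark G P J c + (- ?m) * mark G P J (\<lambda>K. of_bool (K = P))"
      by (simp only: mark_add mark_scale)
    then show ?thesis
      using mark_indicator[OF finite_subgroups_of[OF fin] Ps] fixed_cosets_top[OF P that] by simp
  qed
  have "mark G P I (\<lambda>K. c K + (- ?m) * of_bool (K = P)) = 0"
    using m I(1) unfolding subgroups_of_def by simp
  moreover have "\<not> int p dvd mark G P P (\<lambda>K. c K + (- ?m) * of_bool (K = P))"
  proof
    assume "int p dvd mark G P P (\<lambda>K. c K + (- ?m) * of_bool (K = P))"
    then have "int p dvd mark G P P c - ?m" using m[OF order_refl] by simp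
    from dvd_add[OF this c(1)] show False using c(2) by simp
  qed
  ultimately show ?thesis by blast
qed

lemma ex_mark_vanishing_on:
  assumes fin: "finite (carrier G)" and W: "subgroup W G" and r: "r = 0 \<or> Factorial_Ring.prime r"
    and S: "finite S" "S \<subseteq> Pow W" and T: "T \<subseteq> W"
    and sep: "\<And>I. I \<in> S \<Longrightarrow> \<exists>x. mark G W I x = 0 \<and> \<not> int r dvd mark G W T x"
  shows "\<exists>c. (\<forall>I\<in>S. mark G W I c = 0) \<and> \<not> int r dvd mark G W T c"
  using S sep
proof (induction S rule: finite_induct)
  case empty
  have "W \<in> subgroups_of G W" using W unfolding subgroups_of_def by auto
  then have "mark G W T (\<lambda>K. of_bool (K = W)) = 1"
    using mark_indicator[OF finite_subgroups_of[OF fin]] fixed_cosets_top[OF W T] by simp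
  moreover have "\<not> int r dvd 1" using r by (auto simp: prime_nat_iff)
  ultimately show ?case by (intro exI[of _ "\<lambda>K. of_bool (K = W)"]) simp
next
  case (insert I S)
  have IW: "I \<subseteq> W" and SW: "S \<subseteq> Pow W" using insert.prems(1) by auto
  have "\<And>J. J \<in> S \<Longrightarrow> \<exists>x. mark G W J x = 0 \<and> \<not> int r dvd mark G W T x"
    using insert.prems(2) by blast
  then obtain c where c: "\<forall>J\<in>S. mark G W J c = 0" "\<not> int r dvd mark G W T c"
    using insert.IH[OF SW] by blast
  obtain x where x: "mark G W I x = 0" "\<not> int r dvd mark G W T x"
    using insert.prems(2)[of I] by blast
  obtain e where e: "\<And>J. J \<subseteq> W \<Longrightarrow> mark G W J e = mark G W J c * mark G W J x"
    using ex_mark_mult[OF fin W] by blast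
  have "mark G W J e = 0" if J: "J \<in> insert I S" for J
  proof (cases "J = I")
    case True
    then show ?thesis using e[OF IW] x(1) by simp
  next
    case False
    then have "J \<in> S" using J by blast
    then show ?thesis using e SW c(1) by auto
  qed
  moreover have "\<not> int r dvd mark G W T e"
    using e[OF T] not_dvd_mult_if_zero_or_prime[OF r c(2) x(2)] by simp
  ultimately show ?case by blast
qed

lemma ex_mark_vanishing_below_top:
  assumes fin: "finite (carrier G)" and W: "subgroup W G" and r: "r = 0 \<or> Factorial_Ring.prime r"
    and sep: "\<And>I. I \<in> subgroups_of G W \<Longrightarrow> I \<noteq> W \<Longrightarrow>
      \<exists>x. mark G W I x = 0 \<and> \<not> int r dvd mark G W W x"
  shows "\<exists>c. (\<forall>I\<in>subgroups_of G W. I \<noteq> W \<longrightarrow> mark G W I c = 0) \<and> \<not> int r dvd mark G W W c"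
proof -
  let ?S = "{I \<in> subgroups_of G W. I \<noteq> W}"
  have fin_S: "finite ?S" using finite_subgroups_of[OF fin] by simp
  have S: "?S \<subseteq> Pow W" unfolding subgroups_of_def by blast
  have sep_S: "\<exists>x. mark G W I x = 0 \<and> \<not> int r dvd mark G W W x" if "I \<in> ?S" for I
    using that sep[of I] by simp
  obtain c where "\<forall>I\<in>?S. mark G W I c = 0" "\<not> int r dvd mark G W W c"
    using ex_mark_vanishing_on[OF fin W r fin_S S order_refl sep_S] by blast
  then show ?thesis by auto
qed

end

section \<open>Inclusions between the prime ideals\<close>

context group
begin

lemma not_tideal_le_if_separated:
  assumes W: "subgroup W G" and WH: "W \<subseteq> H" and WK: "\<not> subconj G W K"
    and c: "\<forall>I\<in>subgroups_of G W. I \<noteq> W \<longrightarrow> mark G W I c = 0"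
    and nd: "\<not> int s dvd mark G W W c"
  shows "\<not> tideal_le G K r H s"
proof
  assume "tideal_le G K r H s"
  moreover have "c \<in> pideal G K r W" unfolding pideal_def using c WK by auto
  ultimately have "c \<in> pideal G H s W" using W unfolding tideal_le_def by blast
  moreover have "W \<in> subgroups_of G W" using W unfolding subgroups_of_def by blast
  moreover have "subconj G W H" using subconj_subset[OF WH subgroup.subset[OF W]] .
  ultimately show False using nd unfolding pideal_def by blast
qed

lemma tideal_leI:
  assumes "\<And>W c I. subgroup W G \<Longrightarrow> c \<in> pideal G K r W \<Longrightarrow> I \<in> subgroups_of G W \<Longrightarrow>
    subconj G I H \<Longrightarrow> int s dvd mark G W I c"
  shows "tideal_le G K r H s"
  using assms unfolding tideal_le_def pideal_def by blast

lemma tideal_le_zero_iff: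
  assumes fin: "finite (carrier G)" and H: "subgroup H G"
  shows "tideal_le G K 0 H 0 \<longleftrightarrow> subconj G H K"
proof
  assume le: "tideal_le G K 0 H 0"
  have sep: "\<exists>x. mark G H I x = 0 \<and> \<not> int 0 dvd mark G H H x"
    if I: "I \<in> subgroups_of G H" "I \<noteq> H" for I
  proof -
    obtain x where "mark G H I x = 0" "mark G H H x = int (fixed_cosets G H I I)"
      using ex_mark_separating[OF fin H I] by blast
    moreover have "fixed_cosets G H I I > 0"
      using fixed_cosets_self_pos[OF fin H] I(1) unfolding subgroups_of_def by blast
    ultimately show ?thesis by auto
  qed
  show "subconj G H K"
  proof (rule ccontr)
    assume HK: "\<not> subconj G H K"
    obtain c where "\<forall>I\<in>subgroups_of G H. I \<noteq> H \<longrightarrow> mark G H I c = 0" "\<not> int 0 dvd mark G H H c"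
      using ex_mark_vanishing_below_top[OF fin H disjI1[OF refl] sep] by blast
    then show False using not_tideal_le_if_separated[OF H order_refl HK] le by blast
  qed
next
  assume HK: "subconj G H K"
  show "tideal_le G K 0 H 0"
  proof (rule tideal_leI)
    fix W c I assume c: "c \<in> pideal G K 0 W" and I: "I \<in> subgroups_of G W" "subconj G I H"
    have "subconj G I K"
      using subconj_trans[OF I(2) HK] I(1) subgroup.subset unfolding subgroups_of_def by blast
    then show "int 0 dvd mark G W I c" using c I(1) unfolding pideal_def by blast
  qed
qed

lemma tideal_le_prime_iff:
  assumes fin: "finite (carrier G)" and p: "Factorial_Ring.prime p" and H: "subgroup H G"
    and r: "r = 0 \<or> r = p"
  shows "tideal_le G K r H p \<longleftrightarrow> subconj G (Op G p H) K"
proof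
  assume le: "tideal_le G K r H p"
  let ?P = "Op G p H"
  have P: "subgroup ?P G" by (rule subgroup_Op[OF fin p H])
  show "subconj G ?P K"
  proof (rule ccontr)
    assume PK: "\<not> subconj G ?P K"
    obtain c where "\<forall>I\<in>subgroups_of G ?P. I \<noteq> ?P \<longrightarrow> mark G ?P I c = 0"
      "\<not> int p dvd mark G ?P ?P c"
      using ex_mark_vanishing_below_top[OF fin P disjI2[OF p]
          ex_mark_separating_prime[OF fin p P Op_idem[OF fin p H]]] by blast
    then show False using not_tideal_le_if_separated[OF P Op_subset[OF fin p H] PK] le by blast
  qed
next
  assume PK: "subconj G (Op G p H) K"
  show "tideal_le G K r H p"
  proof (rule tideal_leI)
    fix W c I assume W: "subgroup W G" and c: "c \<in> pideal G K r W"
      and I: "I \<in> subgroups_of G W" and IH: "subconj G I H"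
    have Is: "subgroup I G" "I \<subseteq> W" using I unfolding subgroups_of_def by auto
    have O: "subgroup (Op G p I) G" "Op G p I \<subseteq> I"
      by (rule subgroup_Op[OF fin p Is(1)], rule Op_subset[OF fin p Is(1)])
    have "subconj G (Op G p I) K"
      using subconj_trans[OF subconj_Op[OF fin p H Is(1) IH] PK subgroup.subset[OF O(1)]] .
    moreover have "Op G p I \<in> subgroups_of G W" using O Is unfolding subgroups_of_def by blast
    ultimately have "int r dvd mark G W (Op G p I) c" using c unfolding pideal_def by blast
    then have "int p dvd mark G W (Op G p I) c" using r by auto
    from dvd_add[OF mark_cong_Op[OF fin p W Is, of c] this] show "int p dvd mark G W I c" by simp
  qed
qed

lemma pideal_trivial_subgroup:
  assumes L: "subgroup L G"
  shows "pideal G L s {\<one>} = {c. int s dvd c {\<one>}}"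
proof -
  have S: "subgroups_of G {\<one>} = {{\<one>}}"
    unfolding subgroups_of_def using triv_subgroup subgroup.one_closed by blast
  have "mark G {\<one>} {\<one>} c = c {\<one>}" for c
    using fixed_cosets_top[OF triv_subgroup order_refl] unfolding mark_def S by simp
  moreover have "subconj G {\<one>} L" using subconj_subset subgroup.one_closed[OF L] by blast
  ultimately show ?thesis unfolding pideal_def S by simp
qed

lemma tideal_le_imp_dvd:
  assumes K: "subgroup K G" and H: "subgroup H G" and le: "tideal_le G K r H s"
  shows "int s dvd int r"
proof -
  have "(\<lambda>_. int r) \<in> pideal G K r {\<one>}" by (simp add: pideal_trivial_subgroup[OF K])
  then have "(\<lambda>_. int r) \<in> pideal G H s {\<one>}" using le triv_subgroup unfolding tideal_le_def by blast
  then show ?thesis by (simp add: pideal_trivial_subgroup[OF H])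
qed

end

theorem theorem4p16:
  fixes G :: "('a, 'b) monoid_scheme" and H K :: "'a set" and p q :: nat
  assumes "group G" and "finite (carrier G)"
    and "subgroup H G" and "subgroup K G"
    and "Factorial_Ring.prime p" and "Factorial_Ring.prime q"
  shows "(tideal_le G K 0 H 0 \<longleftrightarrow> subconj G H K)
    \<and> (tideal_less G H 0 H p \<and> \<not> tideal_le G H p K 0)
    \<and> (tideal_le G K p H q \<longleftrightarrow> p = q \<and> subconj G (Op G p H) (Op G p K))
    \<and> (tideal_le G K 0 H p \<longleftrightarrow> subconj G (Op G p H) K)"
proof -
  interpret group G by fact
  note fin = \<open>finite (carrier G)\<close> and H = \<open>subgroup H G\<close> and K = \<open>subgroup K G\<close>
    and p = \<open>Factorial_Ring.prime p\<close> and q = \<open>Factorial_Ring.prime q\<close>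
  have "p > 0" using p prime_gt_0_nat by blast
  have "tideal_le G H 0 H p"
    using tideal_le_prime_iff[OF fin p H, of 0] subconj_subset Op_subset[OF fin p H]
      subgroup.subset[OF subgroup_Op[OF fin p H]] by blast
  moreover have "(\<lambda>_. int p) \<in> pideal G H p {\<one>\<^bsub>G\<^esub>} - pideal G H 0 {\<one>\<^bsub>G\<^esub>}"
    using pideal_trivial_subgroup[OF H] \<open>p > 0\<close> by simp
  moreover have "\<not> tideal_le G H p K 0" using tideal_le_imp_dvd[OF H K] \<open>p > 0\<close> by fastforce
  moreover have "tideal_le G K p H q \<longleftrightarrow> p = q \<and> subconj G (Op G p H) (Op G p K)"
    using tideal_le_imp_dvd[OF K H] primes_dvd_imp_eq[OF q p] tideal_le_prime_iff[OF fin p H]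
      subconj_Op_iff[OF fin p H K] by (metis int_dvd_int_iff)
  ultimately show ?thesis
    using tideal_le_zero_iff[OF fin H] tideal_le_prime_iff[OF fin p H] triv_subgroup
    unfolding tideal_less_def by blast
qed

end
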